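(* Let $(a_n)_{n<0}$ be a sequence in $\mathbb{Z}((q))$ satisfying the lower bound condition. Define the inverted Habiro series \[ P(x)=\sum_{k\ge0}a_{-k-1}\,\tilde\sigma_{-k-1},\qquad \tilde\sigma_{-k-1}=\frac{(-1)^k q^{\binom{k+1}{2}}}{(x;q)_{k+1}(qx^{-1};q)_k}, \] and coefficients $f_i=\sum_{k=0}^{i}\begin{bmatrix} k+i\\ 2k\end{bmatrix}a_{-k-1}$ for $i\ge 0$. Then, as an identity of $q$-series (each term expanded at $q=0$, with coefficients rational functions of $x$), both sides converge and \[ P(x)=\frac{1}{(q,x,qx^{-1};q)_\infty}\sum_{i\ge0}f_i\,\theta_i(x), \qquad \theta_i(x)=(-1)^iq^{\binom{i+1}{2}}\Big(1+\sum_{n=1}^{\infty}(-1)^nq^{\binom{n+1}{2}+ni}(x^n+x^{-n})\Big). \]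
   Context: Let $v$ be an indeterminate, $q=v^2$; $[n]=\frac{v^n-v^{-n}}{v-v^{-1}}$, $[k]!=[k]\cdots[1]$, $\begin{bmatrix} n\\ k\end{bmatrix}=\frac{[n]\cdots[n-k+1]}{[k]!}$. $q$-Pochhammer symbols: $(a;q)_n=\prod_{j=0}^{n-1}(1-aq^j)$ for $n\in\mathbb{Z}_{\ge0}\cup\{\infty\}$, and $(a_1,\dots,a_r;q)_n=\prod_s(a_s;q)_n$. For $f\in\mathbb{Z}((q))$, $\delta(f)$ is the minimal exponent of $q$ in $f$. A sequence $(a_n)_{n<0}$ satisfies the lower bound condition if there is a constant $C$ with $\delta(a_n)\ge-\frac{n(n+3)}{2}+C$ for all $n<0$. Note $(q,x,qx^{-1};q)_\infty$ equals the Jacobi theta function $\theta(x,q)=\sum_{n\in\mathbb{Z}}(-1)^nx^nq^{n(n-1)/2}$. *)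

theory Defs
  imports "HOL-Computational_Algebra.Formal_Laurent_Series"
          "HOL-Computational_Algebra.Fraction_Field"
          "HOL-Computational_Algebra.Polynomial"
begin

text \<open>Coefficient field: rational functions in x, i.e. the fraction field of Z[x].
  All q-series are represented as formal Laurent series in v (with q = v^2),
  coefficients in Q(x).\<close>

type_synonym ratfun = "int poly fract"
type_synonym vser = "ratfun fls"

definition xvar :: ratfun where "xvar = Fract [:0, 1:] 1"

definition vv :: vser where "vv = fls_X"

definition qq :: vser where "qq = vv ^ 2"

definition xx :: vser where "xx = fls_const xvar"

definition xinv :: vser where "xinv = fls_const (inverse xvar)"

lift_definition fls_of_int_coeffs :: "int fls \<Rightarrow> vser" is
  "\<lambda>f n. (of_int (f n) :: ratfun)"
  by (auto elim: eventually_mono)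

definition embq :: "int fls \<Rightarrow> vser" where
  "embq a = fls_compose_power (fls_of_int_coeffs a) 2"

definition qint :: "nat \<Rightarrow> vser" where
  "qint n = (vv ^ n - inverse vv ^ n) / (vv - inverse vv)"

definition qfact :: "nat \<Rightarrow> vser" where
  "qfact k = (\<Prod>j\<in>{1..k}. qint j)"

definition qbinom :: "nat \<Rightarrow> nat \<Rightarrow> vser" where
  "qbinom n k = (\<Prod>j<k. qint (n - j)) / qfact k"

definition qpoch :: "vser \<Rightarrow> nat \<Rightarrow> vser" where
  "qpoch a n = (\<Prod>j<n. 1 - a * qq ^ j)"

definition fls_conv :: "(nat \<Rightarrow> vser) \<Rightarrow> vser \<Rightarrow> bool" where
  "fls_conv s S \<longleftrightarrow> (\<forall>M::int. eventually (\<lambda>N. \<forall>m\<le>M. fls_nth (s N) m = fls_nth S m) sequentially)"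

definition fls_convergent :: "(nat \<Rightarrow> vser) \<Rightarrow> bool" where
  "fls_convergent s \<longleftrightarrow> (\<exists>S. fls_conv s S)"

definition fls_lim :: "(nat \<Rightarrow> vser) \<Rightarrow> vser" where
  "fls_lim s = (THE S. fls_conv s S)"

definition fls_sums :: "(nat \<Rightarrow> vser) \<Rightarrow> vser \<Rightarrow> bool" where
  "fls_sums f S \<longleftrightarrow> fls_conv (\<lambda>N. \<Sum>k<N. f k) S"

definition fls_summable :: "(nat \<Rightarrow> vser) \<Rightarrow> bool" where
  "fls_summable f \<longleftrightarrow> (\<exists>S. fls_sums f S)"

definition fls_suminf :: "(nat \<Rightarrow> vser) \<Rightarrow> vser" where
  "fls_suminf f = (THE S. fls_sums f S)"

definition qpoch_inf :: "vser \<Rightarrow> vser" where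
  "qpoch_inf a = fls_lim (qpoch a)"

definition lower_bound_cond :: "(int \<Rightarrow> int fls) \<Rightarrow> bool" where
  "lower_bound_cond a \<longleftrightarrow>
     (\<exists>C::int. \<forall>n<0. a n \<noteq> 0 \<longrightarrow> fls_subdegree (a n) \<ge> - (n * (n + 3)) div 2 + C)"

definition sigma_tilde :: "nat \<Rightarrow> vser" where
  "sigma_tilde k = (-1) ^ k * qq ^ (k * (k + 1) div 2) / (qpoch xx (k + 1) * qpoch (qq * xinv) k)"

definition P_term :: "(int \<Rightarrow> int fls) \<Rightarrow> nat \<Rightarrow> vser" where
  "P_term a k = embq (a (- int k - 1)) * sigma_tilde k"

definition f_coef :: "(int \<Rightarrow> int fls) \<Rightarrow> nat \<Rightarrow> vser" where
  "f_coef a i = (\<Sum>k\<in>{0..i}. qbinom (k + i) (2 * k) * embq (a (- int k - 1)))"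

text \<open>Term n+1 (n \<ge> 0) of the inner series of theta_i.\<close>

definition theta_inner_term :: "nat \<Rightarrow> nat \<Rightarrow> vser" where
  "theta_inner_term i n = (let m = n + 1 in
     (-1) ^ m * qq ^ (m * (m + 1) div 2 + m * i) * (xx ^ m + xinv ^ m))"

definition theta :: "nat \<Rightarrow> vser" where
  "theta i = (-1) ^ i * qq ^ (i * (i + 1) div 2) * (1 + fls_suminf (theta_inner_term i))"

end

(* Write S_k = sum_i [k + i, 2 k] theta_i. Expanding theta_i as a Laurent series in x, one gets
   S_k = sum_n A_k(|n|) x^n with A_k(m) = sum_i [k + i, 2 k] (-1)^(m+i) q^((m+i)(m+i+1)/2).
   The q-Pascal rules give
     A_(k+1)(m - 1) + A_(k+1)(m + 1) = A_k(m) + (q^(k+1) + q^-(k+1)) A_(k+1)(m),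
   and a telescoping sum gives A_k(-1) = A_k(1); together these say that multiplication by
   x + 1/x - q^(k+1) - q^-(k+1) maps S_(k+1) to S_k. Hence S_k = sigma~_(-k-1) (1 - x) S_0, and
   telescoping once more, (1 - x) S_0 = sum_n (-1)^n q^(n(n-1)/2) x^n, which the Jacobi triple
   product (obtained as the limit of its finite version with Gaussian binomials) identifies with
   (q, x, q/x; q)_inf. So sigma~_(-k-1) = S_k / (q, x, q/x; q)_inf, and the theorem follows by
   summing a_(-k-1) S_k over k and exchanging the two summations, which the lower bound condition
   justifies: the (k, i) term vanishes below order i + const in v. *)

theory Submission
  imports Defs
begin

section \<open>Vanishing below an order and the \<open>X\<close>-adic topology\<close>

definition vanishes_below :: "'a::zero fls \<Rightarrow> int \<Rightarrow> bool" where
  "vanishes_below f M \<longleftrightarrow> (\<forall>m<M. fls_nth f m = 0)"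

lemma vanishes_below_nth: "vanishes_below f M \<Longrightarrow> m < M \<Longrightarrow> fls_nth f m = 0"
  by (simp add: vanishes_below_def)

lemma vanishes_below_iff: "vanishes_below f M \<longleftrightarrow> f = 0 \<or> M \<le> fls_subdegree f"
proof
  assume "vanishes_below f M"
  then show "f = 0 \<or> M \<le> fls_subdegree f"
    unfolding vanishes_below_def by (meson nth_fls_subdegree_nonzero not_le)
qed (auto simp: vanishes_below_def)

lemma vanishes_below_0 [simp]: "vanishes_below 0 M"
  by (simp add: vanishes_below_def)

lemma vanishes_below_subdegree [simp]: "vanishes_below f (fls_subdegree f)"
  by (simp add: vanishes_below_iff)

lemma vanishes_below_const [simp]: "vanishes_below (fls_const c) 0"
  by (simp add: vanishes_below_iff)

lemma vanishes_below_1 [simp]: "vanishes_below 1 0"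
  by (simp add: vanishes_below_def)

lemma vanishes_below_mono: "vanishes_below f M \<Longrightarrow> M' \<le> M \<Longrightarrow> vanishes_below f M'"
  by (auto simp: vanishes_below_def)

lemma vanishes_below_add:
  "vanishes_below f M \<Longrightarrow> vanishes_below g M \<Longrightarrow> vanishes_below (f + g) M"
  by (auto simp: vanishes_below_def)

lemma vanishes_below_uminus [simp]: "vanishes_below (- f) M \<longleftrightarrow> vanishes_below f M"
  by (auto simp: vanishes_below_def)

lemma vanishes_below_diff:
  "vanishes_below f M \<Longrightarrow> vanishes_below g M \<Longrightarrow> vanishes_below (f - g) M"
  by (auto simp: vanishes_below_def)

lemma vanishes_below_diff_commute: "vanishes_below (f - g) M \<longleftrightarrow> vanishes_below (g - f) M"
  using vanishes_below_uminus[of "f - g" M] by simp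

lemma vanishes_below_sum:
  "(\<And>k. k \<in> A \<Longrightarrow> vanishes_below (f k) M) \<Longrightarrow> vanishes_below (\<Sum>k\<in>A. f k) M"
  by (induction A rule: infinite_finite_induct) (auto intro: vanishes_below_add)

lemma vanishes_below_mult:
  fixes f g :: "'a::comm_ring_1 fls"
  assumes "vanishes_below f a" "vanishes_below g b"
  shows "vanishes_below (f * g) (a + b)"
  unfolding vanishes_below_def
proof (intro allI impI)
  fix m assume "m < a + b"
  show "fls_nth (f * g) m = 0"
  proof (cases "f = 0 \<or> g = 0")
    case False
    with assms have "a + b \<le> fls_subdegree f + fls_subdegree g"
      by (auto simp: vanishes_below_iff)
    with \<open>m < a + b\<close> show ?thesis by (intro fls_times_nth_eq0) simp
  qed auto
qed

lemma vanishes_below_mult_const: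
  "vanishes_below f M \<Longrightarrow> vanishes_below (f * fls_const a :: 'a::comm_ring_1 fls) M"
  using vanishes_below_mult[of f M "fls_const a" 0] by simp

lemma vanishes_below_prod:
  fixes f :: "'b \<Rightarrow> 'a::comm_ring_1 fls"
  shows "(\<And>k. k \<in> A \<Longrightarrow> vanishes_below (f k) 0) \<Longrightarrow> vanishes_below (\<Prod>k\<in>A. f k) 0"
  by (induction A rule: infinite_finite_induct) (use vanishes_below_mult[of _ 0 _ 0] in auto)

lemma vanishes_below_fls_X_power_int [simp]:
  "vanishes_below (fls_X powi k :: 'a::field fls) k"
  by (simp add: vanishes_below_iff)

lemma vanishes_below_inverse:
  "fls_subdegree (f :: 'a::field fls) = 0 \<Longrightarrow> vanishes_below (inverse f) 0"
  by (simp add: vanishes_below_iff)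

lemma fls_subdegree_eq_0I:
  assumes "vanishes_below f 0" "fls_nth f 0 \<noteq> 0"
  shows "fls_subdegree f = 0"
proof (rule order_antisym)
  show "fls_subdegree f \<le> 0" using assms(2) by (rule fls_subdegree_leI)
  show "0 \<le> fls_subdegree f" using assms by (auto simp: vanishes_below_iff)
qed

lemma vanishes_below_everywhere_imp_zero: "(\<And>M. vanishes_below f M) \<Longrightarrow> f = 0"
  using vanishes_below_iff[of f "fls_subdegree f + 1"] by auto

definition fls_tendsto :: "(nat \<Rightarrow> 'a::comm_ring_1 fls) \<Rightarrow> 'a fls \<Rightarrow> bool" where
  "fls_tendsto s S \<longleftrightarrow> (\<forall>M. eventually (\<lambda>N. vanishes_below (s N - S) M) sequentially)"

lemma fls_tendsto_zero_iff:
  "fls_tendsto f 0 \<longleftrightarrow> (\<forall>M. eventually (\<lambda>N. vanishes_below (f N) M) sequentially)"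
  by (simp add: fls_tendsto_def)

lemma fls_tendsto_unique:
  assumes "fls_tendsto s S" "fls_tendsto s T"
  shows "S = T"
proof -
  have "vanishes_below (S - T) M" for M
  proof -
    from assms have "eventually (\<lambda>N. vanishes_below (s N - S) M \<and> vanishes_below (s N - T) M)
        sequentially"
      unfolding fls_tendsto_def by (auto intro: eventually_conj)
    then obtain N where S: "vanishes_below (s N - S) M" and T: "vanishes_below (s N - T) M"
      using eventually_happens'[OF sequentially_bot] by blast
    have "vanishes_below ((s N - T) - (s N - S)) M"
      using vanishes_below_diff[OF T S] .
    then show ?thesis by simp
  qed
  then show "S = T"
    using vanishes_below_everywhere_imp_zero[of "S - T"] by simp
qed

lemma fls_tendsto_const [simp]: "fls_tendsto (\<lambda>N. c) c"
  by (simp add: fls_tendsto_def)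

lemma fls_tendsto_add:
  assumes "fls_tendsto s S" "fls_tendsto t T"
  shows "fls_tendsto (\<lambda>N. s N + t N) (S + T)"
  unfolding fls_tendsto_def
proof
  fix M
  from assms have "eventually (\<lambda>N. vanishes_below (s N - S) M \<and> vanishes_below (t N - T) M)
      sequentially"
    unfolding fls_tendsto_def by (auto intro: eventually_conj)
  then show "eventually (\<lambda>N. vanishes_below (s N + t N - (S + T)) M) sequentially"
    by eventually_elim (simp add: add_diff_add vanishes_below_add)
qed

lemma fls_tendsto_mult:
  assumes s: "fls_tendsto s S" and t: "fls_tendsto t T"
  shows "fls_tendsto (\<lambda>N. s N * t N) (S * T)"
  unfolding fls_tendsto_def
proof
  fix M
  let ?L = "fls_subdegree S" and ?L' = "fls_subdegree T"
  have "eventually (\<lambda>N. vanishes_below (s N - S) ?L \<and> vanishes_below (t N - T) (M - ?L)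
      \<and> vanishes_below (s N - S) (M - ?L')) sequentially"
    using s t unfolding fls_tendsto_def by (intro eventually_conj) auto
  then show "eventually (\<lambda>N. vanishes_below (s N * t N - S * T) M) sequentially"
  proof eventually_elim
    case (elim N)
    then have "vanishes_below (s N) ?L"
      using vanishes_below_add[of "s N - S" ?L S] by simp
    with elim have "vanishes_below (s N * (t N - T)) (?L + (M - ?L))"
      and "vanishes_below ((s N - S) * T) ((M - ?L') + ?L')"
      by (intro vanishes_below_mult; simp)+
    then have "vanishes_below (s N * (t N - T) + (s N - S) * T) M"
      by (intro vanishes_below_add) simp_all
    then show ?case by (simp add: algebra_simps)
  qed
qed

lemma fls_tendsto_mult_left: "fls_tendsto s S \<Longrightarrow> fls_tendsto (\<lambda>N. c * s N) (c * S)"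
  by (rule fls_tendsto_mult[OF fls_tendsto_const])

lemma fls_tendsto_uminus: "fls_tendsto s S \<Longrightarrow> fls_tendsto (\<lambda>N. - s N) (- S)"
  using fls_tendsto_mult_left[of s S "-1"] by simp

lemma fls_tendsto_diff:
  "fls_tendsto s S \<Longrightarrow> fls_tendsto t T \<Longrightarrow> fls_tendsto (\<lambda>N. s N - t N) (S - T)"
  using fls_tendsto_add[of s S "\<lambda>N. - t N" "- T"] fls_tendsto_uminus[of t T] by simp

lemma fls_tendsto_shift_iff: "fls_tendsto (\<lambda>N. s (N + k)) S \<longleftrightarrow> fls_tendsto s S"
  unfolding fls_tendsto_def
  using eventually_sequentially_seg[where P = "\<lambda>N. vanishes_below (s N - S) _"] by simp

lemma vanishes_below_limit:
  assumes "fls_tendsto s S" "eventually (\<lambda>N. vanishes_below (s N) M) sequentially"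
  shows "vanishes_below S M"
proof -
  from assms have "eventually (\<lambda>N. vanishes_below (s N) M \<and> vanishes_below (s N - S) M)
      sequentially"
    unfolding fls_tendsto_def by (auto intro: eventually_conj)
  then obtain N where "vanishes_below (s N) M" "vanishes_below (s N - S) M"
    using eventually_happens'[OF sequentially_bot] by blast
  then have "vanishes_below (s N - (s N - S)) M"
    by (rule vanishes_below_diff)
  then show ?thesis by simp
qed

lemma fls_tendsto_zeroI_linear:
  assumes "\<And>i. vanishes_below (f i) (int i + c)"
  shows "fls_tendsto f 0"
  unfolding fls_tendsto_zero_iff eventually_sequentially
proof
  fix M
  show "\<exists>N. \<forall>i\<ge>N. vanishes_below (f i) M"
    by (rule exI[of _ "nat (M - c)"]) (auto intro: vanishes_below_mono[OF assms])
qed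

lift_definition fls_from :: "(int \<Rightarrow> 'a::zero) \<Rightarrow> int \<Rightarrow> 'a fls" is
  "\<lambda>c L m. if m < L then 0 else c m"
proof -
  fix c :: "int \<Rightarrow> 'a" and L :: int
  have "eventually (\<lambda>n::nat. (if - int n < L then 0 else c (- int n)) = 0) sequentially"
    unfolding eventually_sequentially by (intro exI[of _ "nat (1 - L)"]) auto
  then show "\<forall>\<^sub>\<infinity>n. (if - int n < L then 0 else c (- int n)) = 0"
    by (simp add: cofinite_eq_sequentially)
qed

lemma fls_from_nth: "fls_nth (fls_from c L) m = (if m < L then 0 else c m)"
  by transfer simp

lemma fls_cauchy_convergent:
  fixes p :: "nat \<Rightarrow> 'a::comm_ring_1 fls" and K :: "int \<Rightarrow> nat"
  assumes bounded: "\<And>N. vanishes_below (p N) L"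
    and cauchy: "\<And>M N N'. K M \<le> N \<Longrightarrow> K M \<le> N' \<Longrightarrow> vanishes_below (p N - p N') M"
  shows "\<exists>S. fls_tendsto p S"
proof
  \<comment> \<open>the coefficient at \<open>m\<close> has settled from index \<open>K (m + 1)\<close> on\<close>
  define S where "S = fls_from (\<lambda>m. fls_nth (p (K (m + 1))) m) L"
  show "fls_tendsto p S"
    unfolding fls_tendsto_def eventually_sequentially
  proof
    fix M
    have "vanishes_below (p N - S) M" if "(\<Sum>j\<in>{L..<M}. K (j + 1)) \<le> N" for N
      unfolding vanishes_below_def
    proof (intro allI impI)
      fix m assume "m < M"
      show "fls_nth (p N - S) m = 0"
      proof (cases "m < L")
        case True
        then show ?thesis using bounded[of N] by (simp add: S_def fls_from_nth vanishes_below_def)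
      next
        case False
        with \<open>m < M\<close> have "K (m + 1) \<le> (\<Sum>j\<in>{L..<M}. K (j + 1))"
          by (intro member_le_sum) auto
        with that have "vanishes_below (p N - p (K (m + 1))) (m + 1)"
          by (intro cauchy) auto
        then show ?thesis using False by (simp add: S_def fls_from_nth vanishes_below_def)
      qed
    qed
    then show "\<exists>N0. \<forall>N\<ge>N0. vanishes_below (p N - S) M" by blast
  qed
qed

lemma fls_null_bounded_below:
  fixes f :: "nat \<Rightarrow> 'a::comm_ring_1 fls"
  assumes "fls_tendsto f 0"
  obtains L where "\<And>k. vanishes_below (f k) L"
proof -
  obtain K where K: "\<And>k. K \<le> k \<Longrightarrow> vanishes_below (f k) 0"
    using assms unfolding fls_tendsto_zero_iff eventually_sequentially by blast
  define L where "L = Min (insert 0 (fls_subdegree ` f ` {..<K}))"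
  have "vanishes_below (f k) L" for k
  proof (cases "k < K")
    case True
    then have "L \<le> fls_subdegree (f k)" unfolding L_def by (intro Min_le) auto
    then show ?thesis by (simp add: vanishes_below_iff)
  next
    case False
    moreover have "L \<le> 0" unfolding L_def by (intro Min_le) auto
    ultimately show ?thesis by (intro vanishes_below_mono[OF K]) auto
  qed
  then show ?thesis by (rule that)
qed

lemma vanishes_below_partial_sum_diff:
  fixes f :: "nat \<Rightarrow> 'a::comm_ring_1 fls"
  assumes "\<And>k. A \<le> k \<Longrightarrow> vanishes_below (f k) M" "A \<le> B"
  shows "vanishes_below ((\<Sum>k<B. f k) - (\<Sum>k<A. f k)) M"
proof -
  have "(\<Sum>k<B. f k) - (\<Sum>k<A. f k) = (\<Sum>k\<in>{A..<B}. f k)"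
    using sum_diff_nat_ivl[of 0 A B f] assms(2) by (simp add: atLeast0LessThan)
  also have "vanishes_below \<dots> M"
    using assms(1) by (intro vanishes_below_sum) auto
  finally show ?thesis .
qed

lemma fls_summable_if_null:
  fixes f :: "nat \<Rightarrow> 'a::comm_ring_1 fls"
  assumes "fls_tendsto f 0"
  shows "\<exists>S. fls_tendsto (\<lambda>N. \<Sum>k<N. f k) S"
proof -
  have "\<forall>M. \<exists>N. \<forall>k\<ge>N. vanishes_below (f k) M"
    using assms unfolding fls_tendsto_zero_iff eventually_sequentially .
  then obtain K where K: "\<And>M k. K M \<le> k \<Longrightarrow> vanishes_below (f k) M"
    using choice[of "\<lambda>M N. \<forall>k\<ge>N. vanishes_below (f k) M"] by blast
  obtain L where "\<And>k. vanishes_below (f k) L"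
    using fls_null_bounded_below[OF assms] by blast
  then have "\<And>N. vanishes_below (\<Sum>k<N. f k) L"
    by (intro vanishes_below_sum)
  then show ?thesis
  proof (rule fls_cauchy_convergent[where K = K])
    fix M N N' assume "K M \<le> N" "K M \<le> N'"
    have *: "vanishes_below ((\<Sum>k<B. f k) - (\<Sum>k<A. f k)) M" if "K M \<le> A" "A \<le> B" for A B
      using that K by (intro vanishes_below_partial_sum_diff) auto
    show "vanishes_below ((\<Sum>k<N. f k) - (\<Sum>k<N'. f k)) M"
    proof (cases "N \<le> N'")
      case True
      then show ?thesis
        by (subst vanishes_below_diff_commute) (rule *[OF \<open>K M \<le> N\<close>])
    next
      case False
      show ?thesis by (rule *[OF \<open>K M \<le> N'\<close>]) (use False in simp)
    qed
  qed
qed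

lemma fls_convergent_if_differences_null:
  fixes s :: "nat \<Rightarrow> 'a::comm_ring_1 fls"
  assumes "fls_tendsto (\<lambda>n. s (Suc n) - s n) 0"
  shows "\<exists>S. fls_tendsto s S"
proof -
  obtain S where "fls_tendsto (\<lambda>N. \<Sum>k<N. s (Suc k) - s k) S"
    using fls_summable_if_null[OF assms] by blast
  from fls_tendsto_add[OF this fls_tendsto_const[of "s 0"]]
  show ?thesis by (auto simp: sum_lessThan_telescope)
qed

lemma vanishes_below_series_tail:
  fixes f :: "nat \<Rightarrow> 'a::comm_ring_1 fls"
  assumes "fls_tendsto (\<lambda>N. \<Sum>k<N. f k) S" "\<And>k. N \<le> k \<Longrightarrow> vanishes_below (f k) M"
  shows "vanishes_below (S - (\<Sum>k<N. f k)) M"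
proof (rule vanishes_below_limit)
  have "fls_tendsto (\<lambda>K. \<Sum>k<K + N. f k) S"
    using fls_tendsto_shift_iff[of "\<lambda>K. \<Sum>k<K. f k" N S] assms(1) by simp
  then show "fls_tendsto (\<lambda>K. (\<Sum>k<K + N. f k) - (\<Sum>k<N. f k)) (S - (\<Sum>k<N. f k))"
    by (intro fls_tendsto_diff fls_tendsto_const)
  show "eventually (\<lambda>K. vanishes_below ((\<Sum>k<K + N. f k) - (\<Sum>k<N. f k)) M) sequentially"
    using assms(2) by (intro always_eventually allI vanishes_below_partial_sum_diff) auto
qed

section \<open>Doubly infinite series \<open>\<Sum>\<^sub>n c\<^sub>n x\<^sup>n\<close> in a constant \<open>x\<close>\<close>

definition null_at_infinity :: "(int \<Rightarrow> 'a::zero fls) \<Rightarrow> bool" where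
  "null_at_infinity c \<longleftrightarrow> (\<forall>M. \<exists>B. \<forall>n. B \<le> \<bar>n\<bar> \<longrightarrow> vanishes_below (c n) M)"

definition laurent_partial_sum :: "'a::field \<Rightarrow> (int \<Rightarrow> 'a fls) \<Rightarrow> nat \<Rightarrow> 'a fls" where
  "laurent_partial_sum x c N = (\<Sum>n\<in>{- int N..int N}. c n * fls_const (x powi n))"

text \<open>Only meaningful if \<open>null_at_infinity c\<close>; otherwise the symmetric partial sums need not
  converge and \<open>THE\<close> yields an unspecified value.\<close>

definition laurent_sum :: "'a::field \<Rightarrow> (int \<Rightarrow> 'a fls) \<Rightarrow> 'a fls" where
  "laurent_sum x c = (THE S. fls_tendsto (laurent_partial_sum x c) S)"

lemma null_at_infinityI_linear:
  assumes "\<And>n. vanishes_below (c n) (\<bar>n\<bar> + C)"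
  shows "null_at_infinity c"
  unfolding null_at_infinity_def
proof
  fix M
  show "\<exists>B. \<forall>n. B \<le> \<bar>n\<bar> \<longrightarrow> vanishes_below (c n) M"
    by (intro exI[of _ "M - C"]) (auto intro: vanishes_below_mono[OF assms])
qed

lemma null_at_infinity_finite_support: "(\<And>n. B < \<bar>n\<bar> \<Longrightarrow> c n = 0) \<Longrightarrow> null_at_infinity c"
  unfolding null_at_infinity_def by (intro allI exI[of _ "B + 1"]) auto

lemma null_at_infinity_add:
  assumes "null_at_infinity c" "null_at_infinity d"
  shows "null_at_infinity (\<lambda>n. c n + d n)"
  unfolding null_at_infinity_def
proof
  fix M
  obtain B B' where "\<And>n. B \<le> \<bar>n\<bar> \<Longrightarrow> vanishes_below (c n) M"
    and "\<And>n. B' \<le> \<bar>n\<bar> \<Longrightarrow> vanishes_below (d n) M"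
    using assms unfolding null_at_infinity_def by blast
  then show "\<exists>B. \<forall>n. B \<le> \<bar>n\<bar> \<longrightarrow> vanishes_below (c n + d n) M"
    by (intro exI[of _ "max B B'"]) (simp add: vanishes_below_add)
qed

lemma null_at_infinity_sum:
  "(\<And>i. i \<in> A \<Longrightarrow> null_at_infinity (c i)) \<Longrightarrow> null_at_infinity (\<lambda>n. \<Sum>i\<in>A. c i n)"
  by (induction A rule: infinite_finite_induct)
     (auto intro: null_at_infinity_add null_at_infinity_finite_support)

lemma null_at_infinity_mult_left:
  fixes c :: "int \<Rightarrow> 'a::comm_ring_1 fls"
  assumes "null_at_infinity c"
  shows "null_at_infinity (\<lambda>n. a * c n)"
  unfolding null_at_infinity_def
proof
  fix M
  obtain B where B: "\<And>n. B \<le> \<bar>n\<bar> \<Longrightarrow> vanishes_below (c n) (M - fls_subdegree a)"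
    using assms unfolding null_at_infinity_def by blast
  have "vanishes_below (a * c n) M" if "B \<le> \<bar>n\<bar>" for n
    using vanishes_below_mult[OF vanishes_below_subdegree[of a] B[OF that]] by simp
  then show "\<exists>B. \<forall>n. B \<le> \<bar>n\<bar> \<longrightarrow> vanishes_below (a * c n) M" by blast
qed

lemma null_at_infinity_diff:
  fixes c d :: "int \<Rightarrow> 'a::comm_ring_1 fls"
  assumes "null_at_infinity c" "null_at_infinity d"
  shows "null_at_infinity (\<lambda>n. c n - d n)"
proof -
  have "null_at_infinity (\<lambda>n. c n + (- 1) * d n)"
    using assms by (intro null_at_infinity_add null_at_infinity_mult_left)
  then show ?thesis by simp
qed

lemma null_at_infinity_shift: "null_at_infinity c \<Longrightarrow> null_at_infinity (\<lambda>n. c (n + k))"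
  unfolding null_at_infinity_def
proof
  fix M assume "\<forall>M. \<exists>B. \<forall>n. B \<le> \<bar>n\<bar> \<longrightarrow> vanishes_below (c n) M"
  then obtain B where "\<And>n. B \<le> \<bar>n\<bar> \<Longrightarrow> vanishes_below (c n) M" by blast
  then show "\<exists>B. \<forall>n. B \<le> \<bar>n\<bar> \<longrightarrow> vanishes_below (c (n + k)) M"
    by (intro exI[of _ "B + \<bar>k\<bar>"]) auto
qed

lemma laurent_partial_sum_Suc:
  "laurent_partial_sum x c (Suc N) = laurent_partial_sum x c N
     + c (int (Suc N)) * fls_const (x powi int (Suc N))
     + c (- int (Suc N)) * fls_const (x powi (- int (Suc N)))"
proof -
  have "{- int (Suc N)..int (Suc N)} = insert (int (Suc N))
      (insert (- int (Suc N)) {- int N..int N})"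
    by auto
  then show ?thesis unfolding laurent_partial_sum_def by (simp add: algebra_simps)
qed

lemma laurent_sum_eqI: "fls_tendsto (laurent_partial_sum x c) S \<Longrightarrow> laurent_sum x c = S"
  unfolding laurent_sum_def by (intro the_equality) (auto dest: fls_tendsto_unique)

lemma fls_tendsto_laurent_sum:
  assumes "null_at_infinity c"
  shows "fls_tendsto (laurent_partial_sum x c) (laurent_sum x c)"
proof -
  have "fls_tendsto (\<lambda>N. laurent_partial_sum x c (Suc N) - laurent_partial_sum x c N) 0"
    unfolding fls_tendsto_zero_iff eventually_sequentially
  proof
    fix M
    obtain B where B: "\<And>n. B \<le> \<bar>n\<bar> \<Longrightarrow> vanishes_below (c n) M"
      using assms unfolding null_at_infinity_def by blast
    have "vanishes_below (laurent_partial_sum x c (Suc N) - laurent_partial_sum x c N) M"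
      if "nat B \<le> N" for N
    proof -
      have "B \<le> \<bar>int (Suc N)\<bar>" "B \<le> \<bar>- int (Suc N)\<bar>"
        using that by linarith+
      then have "vanishes_below (c (int (Suc N)) * fls_const (x powi int (Suc N))
          + c (- int (Suc N)) * fls_const (x powi (- int (Suc N)))) M"
        by (intro vanishes_below_add vanishes_below_mult_const B)
      then show ?thesis by (simp add: laurent_partial_sum_Suc)
    qed
    then show "\<exists>N0. \<forall>N\<ge>N0. vanishes_below
        (laurent_partial_sum x c (Suc N) - laurent_partial_sum x c N) M" by blast
  qed
  then obtain S where "fls_tendsto (laurent_partial_sum x c) S"
    using fls_convergent_if_differences_null by blast
  with laurent_sum_eqI[OF this] show ?thesis by simp
qed

lemma laurent_sum_add:
  assumes "null_at_infinity c" "null_at_infinity d"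
  shows "laurent_sum x (\<lambda>n. c n + d n) = laurent_sum x c + laurent_sum x d"
proof (rule laurent_sum_eqI)
  have "laurent_partial_sum x (\<lambda>n. c n + d n)
      = (\<lambda>N. laurent_partial_sum x c N + laurent_partial_sum x d N)"
    by (simp add: laurent_partial_sum_def fun_eq_iff algebra_simps sum.distrib)
  then show "fls_tendsto (laurent_partial_sum x (\<lambda>n. c n + d n))
      (laurent_sum x c + laurent_sum x d)"
    using assms by (simp add: fls_tendsto_add fls_tendsto_laurent_sum)
qed

lemma laurent_sum_mult_left:
  assumes "null_at_infinity c"
  shows "laurent_sum x (\<lambda>n. a * c n) = a * laurent_sum x c"
proof (rule laurent_sum_eqI)
  have "laurent_partial_sum x (\<lambda>n. a * c n) = (\<lambda>N. a * laurent_partial_sum x c N)"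
    by (simp add: laurent_partial_sum_def fun_eq_iff sum_distrib_left mult.assoc)
  then show "fls_tendsto (laurent_partial_sum x (\<lambda>n. a * c n)) (a * laurent_sum x c)"
    using assms by (simp add: fls_tendsto_mult_left fls_tendsto_laurent_sum)
qed

lemma laurent_sum_diff:
  assumes "null_at_infinity c" "null_at_infinity d"
  shows "laurent_sum x (\<lambda>n. c n - d n) = laurent_sum x c - laurent_sum x d"
proof -
  have "laurent_sum x (\<lambda>n. c n + (- 1) * d n) = laurent_sum x c + (- 1) * laurent_sum x d"
    using assms by (simp only: laurent_sum_add laurent_sum_mult_left null_at_infinity_mult_left)
  then show ?thesis by simp
qed

lemma laurent_sum_finite_support:
  assumes "\<And>n. int B < \<bar>n\<bar> \<Longrightarrow> c n = 0"
  shows "laurent_sum x c = laurent_partial_sum x c B"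
proof (rule laurent_sum_eqI)
  have "laurent_partial_sum x c (N + B) = laurent_partial_sum x c B" for N
    by (induction N) (simp_all add: laurent_partial_sum_Suc assms)
  then have "fls_tendsto (\<lambda>N. laurent_partial_sum x c (N + B)) (laurent_partial_sum x c B)"
    by simp
  then show "fls_tendsto (laurent_partial_sum x c) (laurent_partial_sum x c B)"
    by (simp only: fls_tendsto_shift_iff)
qed

lemma laurent_sum_single: "laurent_sum x (\<lambda>n. if n = 0 then a else 0) = a"
  by (subst laurent_sum_finite_support[where B = 0]) (auto simp: laurent_partial_sum_def)

lemma laurent_sum_0: "laurent_sum x (\<lambda>n. 0) = 0"
  using laurent_sum_single[of x 0] by simp

lemma laurent_sum_sum:
  "(\<And>i. i \<in> A \<Longrightarrow> null_at_infinity (c i)) \<Longrightarrow>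
     laurent_sum x (\<lambda>n. \<Sum>i\<in>A. c i n) = (\<Sum>i\<in>A. laurent_sum x (c i))"
  by (induction A rule: infinite_finite_induct)
     (simp_all add: laurent_sum_0 laurent_sum_add null_at_infinity_sum)

lemma vanishes_below_laurent_sum:
  assumes "null_at_infinity c" "\<And>n. vanishes_below (c n) M"
  shows "vanishes_below (laurent_sum x c) M"
proof (rule vanishes_below_limit[OF fls_tendsto_laurent_sum[OF assms(1)]])
  show "eventually (\<lambda>N. vanishes_below (laurent_partial_sum x c N) M) sequentially"
    unfolding laurent_partial_sum_def
    by (intro always_eventually allI vanishes_below_sum vanishes_below_mult_const assms(2))
qed

lemma fls_tendsto_null_coeff_mult_const:
  assumes "null_at_infinity c" "\<And>N. int N \<le> \<bar>h N\<bar>"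
  shows "fls_tendsto (\<lambda>N. c (h N) * fls_const (y N)) 0"
  unfolding fls_tendsto_zero_iff eventually_sequentially
proof
  fix M
  obtain B where B: "\<And>n. B \<le> \<bar>n\<bar> \<Longrightarrow> vanishes_below (c n) M"
    using assms(1) unfolding null_at_infinity_def by blast
  have "vanishes_below (c (h N) * fls_const (y N)) M" if "nat B \<le> N" for N
  proof -
    have "B \<le> int N" using that by (simp add: nat_le_iff)
    with assms(2)[of N] have "B \<le> \<bar>h N\<bar>" by linarith
    then show ?thesis by (intro vanishes_below_mult_const B)
  qed
  then show "\<exists>N0. \<forall>N\<ge>N0. vanishes_below (c (h N) * fls_const (y N)) M" by blast
qed

lemma laurent_partial_sum_shift:
  fixes x :: "'a::field"
  assumes "x \<noteq> 0"
  shows "fls_const x * laurent_partial_sum x c N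
    = laurent_partial_sum x (\<lambda>n. c (n - 1)) N
      - c (- int N - 1) * fls_const (x powi (- int N))
      + c (int N) * fls_const (x powi (int N + 1))"
proof -
  let ?c' = "\<lambda>n. c (n - 1)"
  have "fls_const x * laurent_partial_sum x c N
      = (\<Sum>n\<in>{- int N..int N}. ?c' (n + 1) * fls_const (x powi (n + 1)))"
    using assms unfolding laurent_partial_sum_def
    by (simp add: sum_distrib_left power_int_add mult_ac flip: fls_const_mult_const)
  also have "\<dots> = (\<Sum>n\<in>{- int N + 1..int N + 1}. ?c' n * fls_const (x powi n))"
    by (rule sum.reindex_bij_witness[of _ "\<lambda>m. m - 1" "\<lambda>n. n + 1"]) auto
  also have "{- int N + 1..int N + 1} = insert (int N + 1) ({- int N..int N} - {- int N})"
    by auto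
  also have "(\<Sum>n\<in>\<dots>. ?c' n * fls_const (x powi n))
      = ?c' (int N + 1) * fls_const (x powi (int N + 1))
        + (laurent_partial_sum x ?c' N - ?c' (- int N) * fls_const (x powi (- int N)))"
    unfolding laurent_partial_sum_def by (subst sum.insert) (auto simp: sum_diff1)
  finally show ?thesis by (simp add: algebra_simps)
qed

lemma laurent_sum_shift:
  fixes x :: "'a::field"
  assumes "x \<noteq> 0" "null_at_infinity c"
  shows "laurent_sum x (\<lambda>n. c (n - 1)) = fls_const x * laurent_sum x c"
proof -
  have null': "null_at_infinity (\<lambda>n. c (n - 1))"
    using null_at_infinity_shift[OF assms(2), of "- 1"] by simp
  have "fls_tendsto (\<lambda>N. laurent_partial_sum x (\<lambda>n. c (n - 1)) N
      - c (- int N - 1) * fls_const (x powi (- int N))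
      + c (int N) * fls_const (x powi (int N + 1))) (laurent_sum x (\<lambda>n. c (n - 1)) - 0 + 0)"
    by (intro fls_tendsto_add fls_tendsto_diff fls_tendsto_laurent_sum null'
        fls_tendsto_null_coeff_mult_const assms(2)) auto
  then have "fls_tendsto (\<lambda>N. fls_const x * laurent_partial_sum x c N)
      (laurent_sum x (\<lambda>n. c (n - 1)))"
    by (simp add: laurent_partial_sum_shift[OF assms(1)])
  moreover have "fls_tendsto (\<lambda>N. fls_const x * laurent_partial_sum x c N)
      (fls_const x * laurent_sum x c)"
    by (intro fls_tendsto_mult_left fls_tendsto_laurent_sum assms(2))
  ultimately show ?thesis by (rule fls_tendsto_unique)
qed

lemma laurent_sum_shift':
  fixes x :: "'a::field"
  assumes "x \<noteq> 0" "null_at_infinity c"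
  shows "laurent_sum x (\<lambda>n. c (n + 1)) = fls_const (inverse x) * laurent_sum x c"
proof -
  have "laurent_sum x c = fls_const x * laurent_sum x (\<lambda>n. c (n + 1))"
    using laurent_sum_shift[OF assms(1) null_at_infinity_shift[OF assms(2), of 1]] by simp
  then show ?thesis
    using assms(1) by (simp add: fls_const_mult_const[symmetric])
qed

lemma fls_tendsto_laurent_sum_uniform:
  assumes "\<And>i. null_at_infinity (c i)" "null_at_infinity d"
    and "\<And>i n. vanishes_below (c i n - d n) (int i)"
  shows "fls_tendsto (\<lambda>i. laurent_sum x (c i)) (laurent_sum x d)"
  unfolding fls_tendsto_def eventually_sequentially
proof (intro allI exI impI)
  fix M i assume "nat M \<le> i"
  then have "vanishes_below (laurent_sum x (\<lambda>n. c i n - d n)) M"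
    using assms by (intro vanishes_below_laurent_sum null_at_infinity_diff)
      (auto intro: vanishes_below_mono[OF assms(3)] simp: nat_le_iff)
  then show "vanishes_below (laurent_sum x (c i) - laurent_sum x d) M"
    using assms by (simp add: laurent_sum_diff)
qed

lemma fls_tendsto_laurent_sum_series:
  assumes null: "\<And>i. null_at_infinity (g i)"
    and bound: "\<And>i n. vanishes_below (g i n) (int i)"
    and sums: "\<And>n. fls_tendsto (\<lambda>N. \<Sum>i<N. g i n) (G n)"
  shows "fls_tendsto (\<lambda>N. \<Sum>i<N. laurent_sum x (g i)) (laurent_sum x G)"
proof -
  have tail: "vanishes_below ((\<Sum>i<N. g i n) - G n) (int N)" for N n
  proof -
    have "vanishes_below (G n - (\<Sum>i<N. g i n)) (int N)"
      by (rule vanishes_below_series_tail[OF sums]) (auto intro: vanishes_below_mono[OF bound])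
    then show ?thesis by (subst vanishes_below_diff_commute)
  qed
  have null_partial: "null_at_infinity (\<lambda>n. \<Sum>i<N. g i n)" for N
    by (intro null_at_infinity_sum null)
  have "null_at_infinity G"
    unfolding null_at_infinity_def
  proof
    fix M
    obtain B where B: "\<And>n. B \<le> \<bar>n\<bar> \<Longrightarrow> vanishes_below (\<Sum>i<nat M. g i n) M"
      using null_partial unfolding null_at_infinity_def by blast
    have "vanishes_below (G n) M" if "B \<le> \<bar>n\<bar>" for n
    proof -
      have "vanishes_below ((\<Sum>i<nat M. g i n) - ((\<Sum>i<nat M. g i n) - G n)) M"
        by (intro vanishes_below_diff B that vanishes_below_mono[OF tail]) simp
      then show ?thesis by simp
    qed
    then show "\<exists>B. \<forall>n. B \<le> \<bar>n\<bar> \<longrightarrow> vanishes_below (G n) M" by blast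
  qed
  then have "fls_tendsto (\<lambda>N. laurent_sum x (\<lambda>n. \<Sum>i<N. g i n)) (laurent_sum x G)"
    by (intro fls_tendsto_laurent_sum_uniform null_partial tail)
  then show ?thesis
    using null by (simp add: laurent_sum_sum)
qed

section \<open>The convergence notions and constants of the statement\<close>

lemma fls_conv_eq_fls_tendsto: "fls_conv = (fls_tendsto :: _ \<Rightarrow> vser \<Rightarrow> bool)"
proof (intro ext iffI)
  fix s :: "nat \<Rightarrow> vser" and S assume conv: "fls_conv s S"
  show "fls_tendsto s S" unfolding fls_tendsto_def
  proof
    fix M
    from conv have "eventually (\<lambda>N. \<forall>m\<le>M - 1. fls_nth (s N) m = fls_nth S m) sequentially"
      unfolding fls_conv_def by blast
    then show "eventually (\<lambda>N. vanishes_below (s N - S) M) sequentially"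
      by eventually_elim (auto simp: vanishes_below_def)
  qed
next
  fix s :: "nat \<Rightarrow> vser" and S assume tendsto: "fls_tendsto s S"
  show "fls_conv s S" unfolding fls_conv_def
  proof
    fix M
    from tendsto have "eventually (\<lambda>N. vanishes_below (s N - S) (M + 1)) sequentially"
      unfolding fls_tendsto_def by blast
    then show "eventually (\<lambda>N. \<forall>m\<le>M. fls_nth (s N) m = fls_nth S m) sequentially"
      by eventually_elim (auto simp: vanishes_below_def)
  qed
qed

lemma fls_lim_eqI: "fls_tendsto s S \<Longrightarrow> fls_lim s = S"
  unfolding fls_lim_def fls_conv_eq_fls_tendsto by (auto dest: fls_tendsto_unique)

lemma fls_convergentI: "fls_tendsto s S \<Longrightarrow> fls_convergent s"
  unfolding fls_convergent_def fls_conv_eq_fls_tendsto by blast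

lemma fls_suminf_eqI: "fls_tendsto (\<lambda>N. \<Sum>k<N. f k) S \<Longrightarrow> fls_suminf f = S"
  unfolding fls_suminf_def fls_sums_def fls_conv_eq_fls_tendsto
  by (auto dest: fls_tendsto_unique)

lemma fls_summableI: "fls_tendsto (\<lambda>N. \<Sum>k<N. f k) S \<Longrightarrow> fls_summable f"
  unfolding fls_summable_def fls_sums_def fls_conv_eq_fls_tendsto by blast

lemma fls_tendsto_suminf:
  assumes "fls_tendsto f 0"
  shows "fls_tendsto (\<lambda>N. \<Sum>k<N. f k) (fls_suminf f)"
proof -
  obtain S where "fls_tendsto (\<lambda>N. \<Sum>k<N. f k) S"
    using fls_summable_if_null[OF assms] by blast
  with fls_suminf_eqI[OF this] show ?thesis by simp
qed

lemma vanishes_below_suminf: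
  "fls_tendsto f 0 \<Longrightarrow> (\<And>i. vanishes_below (f i) M) \<Longrightarrow> vanishes_below (fls_suminf f) M"
  using vanishes_below_series_tail[OF fls_tendsto_suminf, of f 0 M] by simp

lemma fls_suminf_add:
  "fls_tendsto f 0 \<Longrightarrow> fls_tendsto g 0 \<Longrightarrow>
     fls_suminf (\<lambda>i. f i + g i) = fls_suminf f + fls_suminf g"
  by (intro fls_suminf_eqI) (simp add: sum.distrib fls_tendsto_add fls_tendsto_suminf)

lemma fls_suminf_diff:
  "fls_tendsto f 0 \<Longrightarrow> fls_tendsto g 0 \<Longrightarrow>
     fls_suminf (\<lambda>i. f i - g i) = fls_suminf f - fls_suminf g"
  by (intro fls_suminf_eqI) (simp add: sum_subtractf fls_tendsto_diff fls_tendsto_suminf)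

lemma fls_suminf_mult_left: "fls_tendsto f 0 \<Longrightarrow> fls_suminf (\<lambda>i. c * f i) = c * fls_suminf f"
  by (intro fls_suminf_eqI)
     (simp add: sum_distrib_left[symmetric] fls_tendsto_mult_left fls_tendsto_suminf)

lemma fls_suminf_Suc_shift:
  assumes "fls_tendsto f 0"
  shows "fls_suminf (\<lambda>i. f (Suc i)) = fls_suminf f - f 0"
proof (rule fls_suminf_eqI)
  have "fls_tendsto (\<lambda>N. (\<Sum>k<N + 1. f k) - f 0) (fls_suminf f - f 0)"
    using fls_tendsto_suminf[OF assms] fls_tendsto_shift_iff[of "\<lambda>N. \<Sum>k<N. f k" 1]
    by (intro fls_tendsto_diff fls_tendsto_const) simp
  moreover have "(\<Sum>k<N + 1. f k) - f 0 = (\<Sum>k<N. f (Suc k))" for N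
    using sum.lessThan_Suc_shift[of f N] by simp
  ultimately show "fls_tendsto (\<lambda>N. \<Sum>k<N. f (Suc k)) (fls_suminf f - f 0)"
    by simp
qed

lemma vv_nonzero [simp]: "vv \<noteq> 0"
  by (simp add: vv_def)

lemma vv_powi_add: "vv powi (a + b) = vv powi a * vv powi b"
  by (simp add: power_int_add)

lemma vanishes_below_vv_powi [simp]: "vanishes_below (vv powi k) k"
  unfolding vv_def by (rule vanishes_below_fls_X_power_int)

lemma qq_power: "qq ^ n = vv powi (2 * int n)"
proof -
  have "2 * int n = int (2 * n)" by simp
  then show ?thesis by (simp only: qq_def power_mult[symmetric] power_int_of_nat)
qed

lemma xvar_nonzero [simp]: "xvar \<noteq> 0"
  by (simp add: xvar_def Zero_fract_def eq_fract)

lemma xvar_ne_1: "xvar \<noteq> 1"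
  by (simp add: xvar_def One_fract_def eq_fract one_pCons)

lemma xx_power: "xx ^ n = fls_const (xvar powi int n)"
  by (simp add: xx_def flip: fls_const_power)

lemma xinv_power: "xinv ^ n = fls_const (xvar powi (- int n))"
  by (simp add: xinv_def power_int_minus power_inverse flip: fls_const_power)

lemma xx_xinv: "xx * xinv = 1"
  by (simp add: xx_def xinv_def)

section \<open>Symmetric \<open>q\<close>-numbers and \<open>q\<close>-binomials\<close>

definition vsinh :: "int \<Rightarrow> vser" where "vsinh j = vv powi j - vv powi (- j)"

definition vcosh :: "int \<Rightarrow> vser" where "vcosh j = vv powi j + vv powi (- j)"

lemma vsinh_nonzero: "j \<noteq> 0 \<Longrightarrow> vsinh j \<noteq> 0"
  by (auto simp: vsinh_def vv_def dest: arg_cong[of _ _ fls_subdegree])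

lemma vsinh_add: "vsinh (a + b) = vv powi b * vsinh a + vv powi (- a) * vsinh b"
  by (simp add: vsinh_def algebra_simps flip: vv_powi_add)

lemma vsinh_add': "vsinh (a + b) = vv powi (- b) * vsinh a + vv powi a * vsinh b"
  by (simp add: vsinh_def algebra_simps flip: vv_powi_add)

lemma vanishes_below_vsinh: "vanishes_below (vsinh j) (- \<bar>j\<bar>)"
  unfolding vsinh_def
  by (intro vanishes_below_diff; rule vanishes_below_mono[OF vanishes_below_vv_powi]) simp_all

lemma qint_eq_vsinh: "qint n = vsinh (int n) / vsinh 1"
  by (simp add: qint_def vsinh_def power_int_minus power_inverse)

lemma qint_nonzero: "n \<noteq> 0 \<Longrightarrow> qint n \<noteq> 0"
  by (simp add: qint_eq_vsinh vsinh_nonzero)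

lemma qfact_nonzero: "qfact k \<noteq> 0"
  unfolding qfact_def by (auto simp: qint_nonzero)

lemma qfact_Suc: "qfact (Suc k) = qfact k * qint (Suc k)"
  unfolding qfact_def by (simp add: prod.nat_ivl_Suc')

lemma qbinom_0 [simp]: "qbinom n 0 = 1"
  by (simp add: qbinom_def qfact_def)

lemma qbinom_Suc_right: "qbinom n (Suc k) * qint (Suc k) = qint (n - k) * qbinom n k"
  unfolding qbinom_def using qfact_nonzero[of k] qint_nonzero[of "Suc k"]
  by (simp add: qfact_Suc field_simps)

lemma qbinom_Suc_Suc: "qbinom (Suc n) (Suc k) * qint (Suc k) = qint (Suc n) * qbinom n k"
proof -
  have "(\<Prod>j<Suc k. qint (Suc n - j)) = qint (Suc n) * (\<Prod>j<k. qint (n - j))"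
    using prod.lessThan_Suc_shift[of "\<lambda>j. qint (Suc n - j)" k] by simp
  then show ?thesis
    unfolding qbinom_def qfact_Suc using qfact_nonzero[of k] qint_nonzero[of "Suc k"]
    by (simp add: field_simps)
qed

lemma qbinom_eq_0: "n < k \<Longrightarrow> qbinom n k = 0"
proof (induction k)
  case (Suc k)
  then have "qbinom n (Suc k) * qint (Suc k) = 0"
    using qbinom_Suc_right[of n k] by (cases "n = k") (simp_all add: qint_def)
  then show ?case using qint_nonzero[of "Suc k"] by simp
qed simp

lemma qbinom_Suc_right_vsinh:
  "qbinom n (Suc k) * vsinh (int k + 1) = vsinh (int n - int k) * qbinom n k"
proof (cases "k \<le> n")
  case True
  then show ?thesis using qbinom_Suc_right[of n k] vsinh_nonzero[of 1]
    by (simp add: qint_eq_vsinh of_nat_diff field_simps)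
qed (simp add: qbinom_eq_0)

lemma qbinom_Suc_Suc_vsinh:
  "qbinom (Suc n) (Suc k) * vsinh (int k + 1) = vsinh (int n + 1) * qbinom n k"
  using qbinom_Suc_Suc[of n k] vsinh_nonzero[of 1] by (simp add: qint_eq_vsinh field_simps)

lemma qbinom_Suc_Suc_split:
  assumes "vsinh (int n + 1) = a * vsinh (int n - int k) + b * vsinh (int k + 1)"
  shows "qbinom (Suc n) (Suc k) = a * qbinom n (Suc k) + b * qbinom n k"
proof -
  let ?Q = "vsinh (int k + 1)"
  have "qbinom (Suc n) (Suc k) * ?Q = vsinh (int n + 1) * qbinom n k"
    by (rule qbinom_Suc_Suc_vsinh)
  also have "\<dots> = a * (vsinh (int n - int k) * qbinom n k) + b * qbinom n k * ?Q"
    unfolding assms by (simp add: algebra_simps)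
  also have "\<dots> = (a * qbinom n (Suc k) + b * qbinom n k) * ?Q"
    by (simp only: qbinom_Suc_right_vsinh[symmetric]) (simp add: algebra_simps)
  finally show ?thesis
    using vsinh_nonzero[of "int k + 1"] by simp
qed

lemma qbinom_pascal:
  "qbinom (Suc n) (Suc k)
     = vv powi (- (int k + 1)) * qbinom n (Suc k) + vv powi (int n - int k) * qbinom n k"
  using vsinh_add'[of "int n - int k" "int k + 1"] by (intro qbinom_Suc_Suc_split) simp

lemma qbinom_pascal':
  "qbinom (Suc n) (Suc k)
     = vv powi (int k + 1) * qbinom n (Suc k) + vv powi (int k - int n) * qbinom n k"
  using vsinh_add[of "int n - int k" "int k + 1"] by (intro qbinom_Suc_Suc_split) simp

lemma vanishes_below_qbinom: "vanishes_below (qbinom n k) (- int k * (int n - int k))"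
proof (induction n arbitrary: k)
  case 0
  then show ?case by (cases k) (auto simp: qbinom_eq_0)
next
  case (Suc n)
  show ?case
  proof (cases k)
    case (Suc k')
    show ?thesis
    proof (cases "k' \<le> n")
      case True
      have "vanishes_below (vv powi (- (int k' + 1)) * qbinom n (Suc k'))
          (- (int k' + 1) + (- int (Suc k') * (int n - int (Suc k'))))"
        and "vanishes_below (vv powi (int n - int k') * qbinom n k')
          ((int n - int k') + (- int k' * (int n - int k')))"
        by (intro vanishes_below_mult Suc.IH vanishes_below_vv_powi)+
      then have "vanishes_below (vv powi (- (int k' + 1)) * qbinom n (Suc k')
          + vv powi (int n - int k') * qbinom n k') (- int k * (int (Suc n) - int k))"
        using True by (intro vanishes_below_add; elim vanishes_below_mono)
          (simp_all add: Suc algebra_simps)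
      then show ?thesis using qbinom_pascal[of n k'] Suc by simp
    qed (use Suc in \<open>simp add: qbinom_eq_0\<close>)
  qed simp
qed

lemma qbinom_three_term:
  "qbinom (Suc (Suc n)) (Suc (Suc m)) + qbinom n (Suc (Suc m))
     = qbinom n m + vcosh (int m + 2) * qbinom (Suc n) (Suc (Suc m))"
proof -
  define P Q R X Y where "P = qbinom n (Suc (Suc m))" and "Q = qbinom n (Suc m)"
    and "R = qbinom n m" and "X = qbinom (Suc n) (Suc (Suc m))" and "Y = qbinom (Suc n) (Suc m)"
  have "qbinom (Suc (Suc n)) (Suc (Suc m))
      = vv powi (- (int m + 2)) * X + vv powi (int n - int m) * Y"
    using qbinom_pascal[of "Suc n" "Suc m"] by (simp add: X_def Y_def add.commute)
  moreover have "vv powi (int n - int m) * Y = vv powi (int n + 1) * Q + R"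
    using qbinom_pascal'[of n m]
    by (simp add: Y_def Q_def R_def algebra_simps flip: vv_powi_add)
  moreover have "vv powi (int m + 2) * X = P + vv powi (int n + 1) * Q"
    using qbinom_pascal[of n "Suc m"]
    by (simp add: X_def P_def Q_def algebra_simps flip: vv_powi_add)
  ultimately show ?thesis
    unfolding vcosh_def by (simp add: P_def R_def X_def algebra_simps)
qed

lemma qbinom_mult_vsinh_odd:
  "qbinom (k + i) (2 * k) * vsinh (2 * int i + 1)
   = vsinh (2 * int k + 1) * (vv powi (int i - int k) * qbinom (Suc (k + i)) (Suc (2 * k))
       + vv powi (- (int i + int k + 1)) * qbinom (k + i) (Suc (2 * k)))"
proof -
  define B where "B = qbinom (k + i) (2 * k)"
  have A: "qbinom (Suc (k + i)) (Suc (2 * k)) * vsinh (2 * int k + 1)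
      = vsinh (int k + int i + 1) * B"
    using qbinom_Suc_Suc_vsinh[of "k + i" "2 * k"] by (simp add: B_def)
  have R: "qbinom (k + i) (Suc (2 * k)) * vsinh (2 * int k + 1) = vsinh (int i - int k) * B"
    using qbinom_Suc_right_vsinh[of "k + i" "2 * k"] by (simp add: B_def)
  have "vsinh (2 * int k + 1) * (vv powi (int i - int k) * qbinom (Suc (k + i)) (Suc (2 * k))
       + vv powi (- (int i + int k + 1)) * qbinom (k + i) (Suc (2 * k)))
      = vv powi (int i - int k) * (qbinom (Suc (k + i)) (Suc (2 * k)) * vsinh (2 * int k + 1))
        + vv powi (- (int i + int k + 1)) * (qbinom (k + i) (Suc (2 * k)) * vsinh (2 * int k + 1))"
    by (simp add: algebra_simps)
  also have "\<dots> = B * (vv powi (int i - int k) * vsinh (int k + int i + 1)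
          + vv powi (- (int k + int i + 1)) * vsinh (int i - int k))"
    unfolding A R by (simp add: algebra_simps)
  also have "\<dots> = B * vsinh (2 * int i + 1)"
    using vsinh_add[of "int k + int i + 1" "int i - int k"] by simp
  finally show ?thesis by (simp add: B_def)
qed

definition qbinom_int :: "nat \<Rightarrow> int \<Rightarrow> vser" where
  "qbinom_int n k = (if k < 0 then 0 else qbinom n (nat k))"

lemma qbinom_int_pascal:
  "qbinom_int (Suc n) (k + 1)
     = vv powi (- (k + 1)) * qbinom_int n (k + 1) + vv powi (int n - k) * qbinom_int n k"
proof (cases "k \<ge> 0")
  case True
  then obtain k' where "k = int k'" by (metis nonneg_eq_int)
  then show ?thesis using qbinom_pascal[of n k'] by (simp add: qbinom_int_def nat_add_distrib)
qed (cases "k = -1"; simp add: qbinom_int_def)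

lemma qbinom_int_pascal':
  "qbinom_int (Suc n) (k + 1)
     = vv powi (k + 1) * qbinom_int n (k + 1) + vv powi (k - int n) * qbinom_int n k"
proof (cases "k \<ge> 0")
  case True
  then obtain k' where "k = int k'" by (metis nonneg_eq_int)
  then show ?thesis using qbinom_pascal'[of n k'] by (simp add: qbinom_int_def nat_add_distrib)
qed (cases "k = -1"; simp add: qbinom_int_def)

lemma qbinom_int_three_term:
  "qbinom_int (Suc (Suc n)) (k + 1)
     = qbinom_int n (k - 1) + qbinom_int n (k + 1) + vcosh (int n + 1) * qbinom_int n k"
proof -
  have "qbinom_int (Suc (Suc n)) (k + 1)
      = vv powi (- (k + 1)) * qbinom_int (Suc n) (k + 1)
        + vv powi (int n + 1 - k) * qbinom_int (Suc n) k"
    using qbinom_int_pascal[of "Suc n" k] by (simp add: algebra_simps)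
  also have "\<dots> = vv powi (- (k + 1)) *
      (vv powi (k + 1) * qbinom_int n (k + 1) + vv powi (k - int n) * qbinom_int n k)
      + vv powi (int n + 1 - k) *
          (vv powi k * qbinom_int n k + vv powi (k - 1 - int n) * qbinom_int n (k - 1))"
    using qbinom_int_pascal'[of n k] qbinom_int_pascal'[of n "k - 1"] by simp
  also have "\<dots> = (vv powi (- (k + 1)) * vv powi (k + 1)) * qbinom_int n (k + 1)
      + (vv powi (- (k + 1)) * vv powi (k - int n) + vv powi (int n + 1 - k) * vv powi k)
          * qbinom_int n k
      + (vv powi (int n + 1 - k) * vv powi (k - 1 - int n)) * qbinom_int n (k - 1)"
    by (simp only: distrib_left distrib_right mult.assoc add.assoc)
  also have "\<dots> = qbinom_int n (k - 1) + qbinom_int n (k + 1) + vcosh (int n + 1) * qbinom_int n k"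
    by (simp only: flip: vv_powi_add) (simp add: vcosh_def algebra_simps)
  finally show ?thesis .
qed

definition qtri :: "int \<Rightarrow> vser" where "qtri j = (- 1) powi j * vv powi (j * (j + 1))"

lemma minus_one_powi_succ: "(- 1 :: 'a::division_ring) powi (j + 1) = - ((- 1) powi j)"
  by (simp add: power_int_add)

lemma qtri_succ: "qtri (j + 1) = - (vv powi (2 * (j + 1)) * qtri j)"
proof -
  have "(j + 1) * (j + 1 + 1) = 2 * (j + 1) + j * (j + 1)" by (simp add: algebra_simps)
  then show ?thesis unfolding qtri_def minus_one_powi_succ by (simp add: vv_powi_add)
qed

lemma qtri_minus: "qtri (- j - 1) = - qtri j"
proof -
  have "(- j - 1) * (- j - 1 + 1) = j * (j + 1)" by (simp add: algebra_simps)
  moreover have "(- 1 :: vser) powi (- j - 1) = - ((- 1) powi j)"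
    by (simp add: power_int_minus_left even_diff)
  ultimately show ?thesis unfolding qtri_def by simp
qed

lemma vanishes_below_qtri: "vanishes_below (qtri j) (j * (j + 1))"
  using vanishes_below_mult[OF vanishes_below_const[of "(- 1) powi j"] vanishes_below_vv_powi]
  by (simp add: qtri_def fls_const_power_int)

lemma qtri_of_nat: "(- 1) ^ k * qq ^ (k * (k + 1) div 2) = qtri (int k)"
proof -
  have "2 * (k * (k + 1) div 2) = k * (k + 1)" by simp
  then have "int (2 * (k * (k + 1) div 2)) = int (k * (k + 1))" by (rule arg_cong)
  then have "2 * int (k * (k + 1) div 2) = int k * (int k + 1)"
    by (simp only: of_nat_mult of_nat_add of_nat_1 of_nat_numeral)
  then show ?thesis unfolding qtri_def qq_power by simp
qed

lemma qtri_add: "qtri (int a) * qtri (int b) * qq ^ (a * b) = qtri (int a + int b)"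
proof -
  have "int a * (int a + 1) + (int b * (int b + 1) + 2 * int (a * b))
      = (int a + int b) * (int a + int b + 1)"
    by (simp add: algebra_simps)
  then have v: "vv powi (int a * (int a + 1)) *
      (vv powi (int b * (int b + 1)) * vv powi (2 * int (a * b)))
      = vv powi ((int a + int b) * (int a + int b + 1))"
    by (simp only: vv_powi_add[symmetric])
  have s: "(- 1 :: vser) powi int a * (- 1) powi int b = (- 1) powi (int a + int b)"
    by (simp add: power_int_add)
  have "qtri (int a) * qtri (int b) * qq ^ (a * b) = ((- 1) powi int a * (- 1) powi int b)
      * (vv powi (int a * (int a + 1)) *
          (vv powi (int b * (int b + 1)) * vv powi (2 * int (a * b))))"
    unfolding qtri_def qq_power by (simp only: mult_ac)
  also have "\<dots> = qtri (int a + int b)"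
    unfolding s v qtri_def ..
  finally show ?thesis .
qed

section \<open>The theta functions \<open>\<theta>\<^sub>i\<close> as Laurent series in \<open>x\<close>\<close>

definition theta_coeff :: "nat \<Rightarrow> int \<Rightarrow> vser" where
  "theta_coeff i n = qtri (\<bar>n\<bar> + int i)"

lemma vanishes_below_theta_coeff: "vanishes_below (theta_coeff i n) (\<bar>n\<bar> + int i * (int i + 1))"
  unfolding theta_coeff_def
  by (rule vanishes_below_mono[OF vanishes_below_qtri]) (simp add: algebra_simps)

lemma null_at_infinity_theta_coeff: "null_at_infinity (theta_coeff i)"
  by (rule null_at_infinityI_linear[OF vanishes_below_theta_coeff])

lemma theta_inner_term_eq:
  "theta_inner_term i n = qtri (int (Suc n)) * qq ^ (Suc n * i)
     * (fls_const (xvar powi int (Suc n)) + fls_const (xvar powi (- int (Suc n))))"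
proof -
  have "theta_inner_term i n = ((- 1) ^ Suc n * qq ^ (Suc n * (Suc n + 1) div 2))
      * qq ^ (Suc n * i) * (xx ^ Suc n + xinv ^ Suc n)"
    by (simp only: theta_inner_term_def Let_def Suc_eq_plus1 power_add mult.assoc)
  then show ?thesis by (simp only: qtri_of_nat xx_power xinv_power)
qed

lemma qtri_mult_theta_inner_term:
  "qtri (int i) * theta_inner_term i n
     = qtri (int (Suc n) + int i)
       * (fls_const (xvar powi int (Suc n)) + fls_const (xvar powi (- int (Suc n))))"
proof -
  have "qtri (int i) * theta_inner_term i n = (qtri (int (Suc n)) * qtri (int i) * qq ^ (Suc n * i))
      * (fls_const (xvar powi int (Suc n)) + fls_const (xvar powi (- int (Suc n))))"
    unfolding theta_inner_term_eq by (simp only: mult_ac)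
  also have "qtri (int (Suc n)) * qtri (int i) * qq ^ (Suc n * i) = qtri (int (Suc n) + int i)"
    by (rule qtri_add)
  finally show ?thesis .
qed

lemma vanishes_below_theta_inner_term: "vanishes_below (theta_inner_term i n) (int n)"
proof -
  have "vanishes_below (theta_inner_term i n)
      (int (Suc n) * (int (Suc n) + 1) + 2 * int (Suc n * i) + 0)"
    unfolding theta_inner_term_eq
    by (intro vanishes_below_mult vanishes_below_add vanishes_below_qtri vanishes_below_const)
       (simp add: qq_power)
  then show ?thesis by (rule vanishes_below_mono) (simp add: algebra_simps)
qed

lemma fls_tendsto_theta_inner_term: "fls_tendsto (theta_inner_term i) 0"
  by (rule fls_tendsto_zeroI_linear[where c = 0]) (simp add: vanishes_below_theta_inner_term)

lemma laurent_partial_sum_theta_coeff: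
  "laurent_partial_sum xvar (theta_coeff i) N = qtri (int i) * (1 + (\<Sum>n<N. theta_inner_term i n))"
proof (induction N)
  case (Suc N)
  have "theta_coeff i (int (Suc N)) = qtri (int (Suc N) + int i)"
    and "theta_coeff i (- int (Suc N)) = qtri (int (Suc N) + int i)"
    by (simp_all only: theta_coeff_def abs_minus_cancel abs_of_nat)
  then show ?case
    unfolding laurent_partial_sum_Suc Suc.IH sum.lessThan_Suc distrib_left
      qtri_mult_theta_inner_term
    by (simp add: algebra_simps)
qed (simp add: laurent_partial_sum_def theta_coeff_def)

lemma theta_eq_laurent_sum: "theta i = laurent_sum xvar (theta_coeff i)"
proof -
  have "fls_tendsto (\<lambda>N. qtri (int i) * (1 + (\<Sum>n<N. theta_inner_term i n)))
          (qtri (int i) * (1 + fls_suminf (theta_inner_term i)))"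
    by (intro fls_tendsto_mult_left fls_tendsto_add fls_tendsto_const fls_tendsto_suminf
        fls_tendsto_theta_inner_term)
  then show ?thesis
    unfolding laurent_partial_sum_theta_coeff[symmetric] theta_def qtri_of_nat
    by (rule laurent_sum_eqI[symmetric])
qed

lemma vanishes_below_theta: "vanishes_below (theta i) (int i * (int i + 1))"
  unfolding theta_eq_laurent_sum
  by (rule vanishes_below_laurent_sum[OF null_at_infinity_theta_coeff])
     (rule vanishes_below_mono[OF vanishes_below_theta_coeff], simp)

section \<open>The series \<open>S\<^sub>k = \<Sum>\<^sub>i [k + i, 2 k] \<theta>\<^sub>i\<close>\<close>

lemma quadratic_form_nonneg: "0 \<le> a * a + a * b + b * (b :: 'a::linordered_idom)"
proof -
  have "0 \<le> (2 * a + b) * (2 * a + b) + 3 * (b * b)" by simp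
  then show ?thesis by (simp add: algebra_simps)
qed

lemma vanishes_below_qbinom_qtri:
  "vanishes_below (qbinom (a + i) b * qtri (m + int i))
     (int i + (m * (m + 1) - int b * (int a - int b) - (2 * m - int b) * (2 * m - int b)))"
proof (rule vanishes_below_mono)
  show "vanishes_below (qbinom (a + i) b * qtri (m + int i))
      (- int b * (int (a + i) - int b) + (m + int i) * (m + int i + 1))"
    by (intro vanishes_below_mult vanishes_below_qbinom vanishes_below_qtri)
  have "0 \<le> int i * int i + int i * (2 * m - int b) + (2 * m - int b) * (2 * m - int b)"
    by (rule quadratic_form_nonneg)
  then show "int i + (m * (m + 1) - int b * (int a - int b) - (2 * m - int b) * (2 * m - int b))
      \<le> - int b * (int (a + i) - int b) + (m + int i) * (m + int i + 1)"
    by (simp add: algebra_simps)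
qed

lemma fls_tendsto_qbinom_qtri: "fls_tendsto (\<lambda>i. qbinom (a + i) b * qtri (m + int i)) 0"
  by (rule fls_tendsto_zeroI_linear[OF vanishes_below_qbinom_qtri])

definition theta_binom_coeff :: "nat \<Rightarrow> int \<Rightarrow> vser" where
  "theta_binom_coeff k m = fls_suminf (\<lambda>i. qbinom (k + i) (2 * k) * qtri (m + int i))"

lemma vanishes_below_theta_binom_term:
  assumes "0 \<le> m"
  shows "vanishes_below (qbinom (k + i) (2 * k) * qtri (m + int i)) (int i + m)"
proof (rule vanishes_below_mono)
  show "vanishes_below (qbinom (k + i) (2 * k) * qtri (m + int i))
      (- int (2 * k) * (int (k + i) - int (2 * k)) + (m + int i) * (m + int i + 1))"
    by (intro vanishes_below_mult vanishes_below_qbinom vanishes_below_qtri)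
  have "0 \<le> (m + int i - int k) * (m + int i - int k)" by simp
  then have "int i + m + int k * int k + 2 * m * int k
      \<le> - int (2 * k) * (int (k + i) - int (2 * k)) + (m + int i) * (m + int i + 1)"
    by (simp add: algebra_simps)
  moreover have "0 \<le> int k * int k" "0 \<le> m * int k"
    using assms by simp_all
  ultimately show
    "int i + m \<le> - int (2 * k) * (int (k + i) - int (2 * k)) + (m + int i) * (m + int i + 1)"
    by linarith
qed

lemma vanishes_below_theta_binom_coeff: "0 \<le> m \<Longrightarrow> vanishes_below (theta_binom_coeff k m) m"
  unfolding theta_binom_coeff_def
  by (intro vanishes_below_suminf fls_tendsto_qbinom_qtri)
     (auto intro: vanishes_below_mono[OF vanishes_below_theta_binom_term])

lemma null_at_infinity_theta_binom_coeff: "null_at_infinity (\<lambda>n. theta_binom_coeff k \<bar>n\<bar>)"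
  by (rule null_at_infinityI_linear[where C = 0]) (simp add: vanishes_below_theta_binom_coeff)

lemma theta_binom_coeff_Suc_pred:
  "theta_binom_coeff (Suc k) (m - 1)
     = fls_suminf (\<lambda>i. qbinom (Suc (Suc (k + i))) (Suc (Suc (2 * k))) * qtri (m + int i))"
  using fls_suminf_Suc_shift[OF fls_tendsto_qbinom_qtri[of "Suc k" "2 * Suc k" "m - 1"]]
  unfolding theta_binom_coeff_def by (simp add: qbinom_eq_0 algebra_simps)

lemma theta_binom_coeff_Suc_succ:
  "theta_binom_coeff (Suc k) (m + 1)
     = fls_suminf (\<lambda>i. qbinom (k + i) (Suc (Suc (2 * k))) * qtri (m + int i))"
  using fls_suminf_Suc_shift[OF fls_tendsto_qbinom_qtri[of k "Suc (Suc (2 * k))" m]]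
  unfolding theta_binom_coeff_def by (simp add: qbinom_eq_0 algebra_simps)

lemma theta_binom_coeff_rec:
  "theta_binom_coeff (Suc k) (m - 1) + theta_binom_coeff (Suc k) (m + 1)
     = theta_binom_coeff k m + vcosh (2 * int k + 2) * theta_binom_coeff (Suc k) m"
proof -
  define P where "P i = qbinom (Suc (Suc (k + i))) (Suc (Suc (2 * k))) * qtri (m + int i)" for i
  define Q where "Q i = qbinom (k + i) (Suc (Suc (2 * k))) * qtri (m + int i)" for i
  define R where "R i = qbinom (k + i) (2 * k) * qtri (m + int i)" for i
  define X where "X i = qbinom (Suc (k + i)) (Suc (Suc (2 * k))) * qtri (m + int i)" for i
  have P: "fls_tendsto P 0" and Q: "fls_tendsto Q 0" and R: "fls_tendsto R 0"
      and X: "fls_tendsto X 0"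
    unfolding P_def Q_def R_def X_def
    using fls_tendsto_qbinom_qtri[of "Suc (Suc k)"] fls_tendsto_qbinom_qtri[of k]
      fls_tendsto_qbinom_qtri[of "Suc k"]
    by simp_all
  have PQ: "P i + Q i = R i + vcosh (2 * int k + 2) * X i" for i
  proof -
    from qbinom_three_term[of "k + i" "2 * k"]
    have "(qbinom (Suc (Suc (k + i))) (Suc (Suc (2 * k))) + qbinom (k + i) (Suc (Suc (2 * k))))
        * qtri (m + int i) = (qbinom (k + i) (2 * k) + vcosh (2 * int k + 2)
        * qbinom (Suc (k + i)) (Suc (Suc (2 * k)))) * qtri (m + int i)"
      by simp
    then show ?thesis
      unfolding P_def Q_def R_def X_def by (simp only: distrib_right mult.assoc)
  qed
  have "theta_binom_coeff (Suc k) (m - 1) + theta_binom_coeff (Suc k) (m + 1)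
      = fls_suminf P + fls_suminf Q"
    unfolding theta_binom_coeff_Suc_pred theta_binom_coeff_Suc_succ P_def Q_def ..
  also have "\<dots> = fls_suminf (\<lambda>i. R i + vcosh (2 * int k + 2) * X i)"
    unfolding PQ[symmetric] by (rule fls_suminf_add[OF P Q, symmetric])
  also have "\<dots> = fls_suminf R + fls_suminf (\<lambda>i. vcosh (2 * int k + 2) * X i)"
    by (rule fls_suminf_add[OF R]) (use fls_tendsto_mult_left[OF X] in simp)
  also have "\<dots> = fls_suminf R + vcosh (2 * int k + 2) * fls_suminf X"
    by (simp only: fls_suminf_mult_left[OF X])
  also have "\<dots> = theta_binom_coeff k m + vcosh (2 * int k + 2) * theta_binom_coeff (Suc k) m"
    unfolding theta_binom_coeff_def R_def X_def by simp
  finally show ?thesis .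
qed

lemma qtri_succ_minus_pred:
  "qtri (j + 1) - qtri (j - 1) = qtri (j - 1) * (vv powi (2 * j + 1) * vsinh (2 * j + 1))"
proof -
  have "qtri (j + 1) = vv powi (2 * (j + 1)) * vv powi (2 * j) * qtri (j - 1)"
    using qtri_succ[of j] qtri_succ[of "j - 1"] by simp
  also have "vv powi (2 * (j + 1)) * vv powi (2 * j) = 1 + vv powi (2 * j + 1) * vsinh (2 * j + 1)"
    unfolding vsinh_def by (simp add: algebra_simps flip: vv_powi_add)
  finally show ?thesis by (simp add: algebra_simps)
qed

text \<open>A discrete antiderivative of \<open>i \<mapsto> [k + i, 2 k] (qtri (i + 1) - qtri (i - 1))\<close> that vanishes
  at \<open>i = 0\<close> and as \<open>i \<rightarrow> \<infinity>\<close>; this is where \<open>theta_binom_coeff k (- 1) = theta_binom_coeff k 1\<close>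
  comes from.\<close>

definition theta_binom_telescope :: "nat \<Rightarrow> nat \<Rightarrow> vser" where
  "theta_binom_telescope k i = - (vsinh (2 * int k + 1) * qtri (int i - 1) * vv powi (int i - int k)
     * qbinom (i + k) (Suc (2 * k)))"

lemma theta_binom_telescope_step:
  "qbinom (k + i) (2 * k) * (qtri (int i + 1) - qtri (int i - 1))
     = theta_binom_telescope k (Suc i) - theta_binom_telescope k i"
proof -
  let ?c = "vsinh (2 * int k + 1) * qtri (int i - 1)"
    and ?Q1 = "qbinom (Suc (k + i)) (Suc (2 * k))" and ?Q0 = "qbinom (k + i) (Suc (2 * k))"
  have "qbinom (k + i) (2 * k) * (qtri (int i + 1) - qtri (int i - 1))
      = qtri (int i - 1) * vv powi (2 * int i + 1) *
          (qbinom (k + i) (2 * k) * vsinh (2 * int i + 1))"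
    unfolding qtri_succ_minus_pred by (simp add: algebra_simps)
  also have "\<dots> = ?c * ((vv powi (2 * int i + 1) * vv powi (int i - int k)) * ?Q1
      + (vv powi (2 * int i + 1) * vv powi (- (int i + int k + 1))) * ?Q0)"
    unfolding qbinom_mult_vsinh_odd by (simp add: algebra_simps)
  also have "\<dots> = ?c * (vv powi (3 * int i + 1 - int k) * ?Q1 + vv powi (int i - int k) * ?Q0)"
    by (simp only: flip: vv_powi_add) (simp add: algebra_simps)
  also have "\<dots> = theta_binom_telescope k (Suc i) - theta_binom_telescope k i"
  proof -
    have "qtri (int (Suc i) - 1) = - (vv powi (2 * int i) * qtri (int i - 1))"
      using qtri_succ[of "int i - 1"] by simp
    moreover have
      "vv powi (2 * int i) * vv powi (int (Suc i) - int k) = vv powi (3 * int i + 1 - int k)"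
      by (simp only: flip: vv_powi_add) (simp add: algebra_simps)
    ultimately show ?thesis
      unfolding theta_binom_telescope_def by (simp add: algebra_simps)
  qed
  finally show ?thesis .
qed

lemma fls_tendsto_theta_binom_telescope: "fls_tendsto (theta_binom_telescope k) 0"
proof (rule fls_tendsto_zeroI_linear, rule vanishes_below_mono)
  fix i
  show "vanishes_below (theta_binom_telescope k i)
      (- \<bar>2 * int k + 1\<bar> + (int i - 1) * (int i - 1 + 1)
      + (int i - int k) + (- int (Suc (2 * k)) * (int (i + k) - int (Suc (2 * k)))))"
    unfolding theta_binom_telescope_def vanishes_below_uminus
    by (intro vanishes_below_mult vanishes_below_vsinh vanishes_below_qtri vanishes_below_vv_powi
        vanishes_below_qbinom)
  have "0 \<le> int i * int i + int i * (- (2 * int k + 2)) + (- (2 * int k + 2)) * (- (2 * int k + 2))"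
    by (rule quadratic_form_nonneg)
  then show "int i + (- (2 * int k + 1) - int k + (2 * int k + 1) * (int k + 1)
        - (2 * int k + 2) * (2 * int k + 2))
      \<le> - \<bar>2 * int k + 1\<bar> + (int i - 1) * (int i - 1 + 1) + (int i - int k)
        + (- int (Suc (2 * k)) * (int (i + k) - int (Suc (2 * k))))"
    by (simp add: algebra_simps)
qed

lemma theta_binom_coeff_minus_one: "theta_binom_coeff k (- 1) = theta_binom_coeff k 1"
proof -
  let ?T = "theta_binom_telescope k"
  have "(\<Sum>i<N. qbinom (k + i) (2 * k) * (qtri (int i + 1) - qtri (int i - 1))) = ?T N" for N
    using sum_lessThan_telescope[of ?T N]
    by (simp add: theta_binom_telescope_step theta_binom_telescope_def qbinom_eq_0)
  with fls_tendsto_theta_binom_telescope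
  have "fls_suminf (\<lambda>i. qbinom (k + i) (2 * k) * (qtri (int i + 1) - qtri (int i - 1))) = 0"
    by (intro fls_suminf_eqI) simp
  moreover have "fls_suminf (\<lambda>i. qbinom (k + i) (2 * k) * (qtri (int i + 1) - qtri (int i - 1)))
      = theta_binom_coeff k 1 - theta_binom_coeff k (- 1)"
    unfolding theta_binom_coeff_def right_diff_distrib
    using fls_tendsto_qbinom_qtri[of k "2 * k" 1] fls_tendsto_qbinom_qtri[of k "2 * k" "- 1"]
    by (subst fls_suminf_diff) (simp_all add: add.commute)
  ultimately show ?thesis by simp
qed

definition theta_binom_sum :: "nat \<Rightarrow> vser" where
  "theta_binom_sum k = laurent_sum xvar (\<lambda>n. theta_binom_coeff k \<bar>n\<bar>)"

lemma theta_binom_coeff_abs_rec: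
  "theta_binom_coeff (Suc k) \<bar>n - 1\<bar> + theta_binom_coeff (Suc k) \<bar>n + 1\<bar>
     = theta_binom_coeff k \<bar>n\<bar> + vcosh (2 * int k + 2) * theta_binom_coeff (Suc k) \<bar>n\<bar>"
proof (cases "0 < n")
  case True
  then show ?thesis using theta_binom_coeff_rec[of k n] by simp
next
  case False
  show ?thesis
  proof (cases "n = 0")
    case True
    then show ?thesis
      using theta_binom_coeff_rec[of k 0] theta_binom_coeff_minus_one[of "Suc k"] by simp
  next
    case False
    with \<open>\<not> 0 < n\<close> have "\<bar>n - 1\<bar> = - n + 1" "\<bar>n + 1\<bar> = - n - 1" "\<bar>n\<bar> = - n" by auto
    then show ?thesis using theta_binom_coeff_rec[of k "- n"] by (simp add: add.commute)
  qed
qed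

lemma theta_binom_sum_rec:
  "(xx + xinv) * theta_binom_sum (Suc k)
     = theta_binom_sum k + vcosh (2 * int k + 2) * theta_binom_sum (Suc k)"
proof -
  let ?c = "\<lambda>n. theta_binom_coeff (Suc k) \<bar>n\<bar>"
  have null: "null_at_infinity ?c" "null_at_infinity (\<lambda>n. ?c (n - 1))"
    "null_at_infinity (\<lambda>n. ?c (n + 1))"
    using null_at_infinity_shift[OF null_at_infinity_theta_binom_coeff, of "Suc k" "- 1"]
      null_at_infinity_shift[OF null_at_infinity_theta_binom_coeff, of "Suc k" 1]
    by (simp_all add: null_at_infinity_theta_binom_coeff)
  have "(xx + xinv) * theta_binom_sum (Suc k)
      = laurent_sum xvar (\<lambda>n. ?c (n - 1)) + laurent_sum xvar (\<lambda>n. ?c (n + 1))"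
    unfolding theta_binom_sum_def distrib_right xx_def xinv_def
    using laurent_sum_shift[OF xvar_nonzero null(1)] laurent_sum_shift'[OF xvar_nonzero null(1)]
    by simp
  also have "\<dots> = laurent_sum xvar (\<lambda>n. ?c (n - 1) + ?c (n + 1))"
    using null by (simp add: laurent_sum_add)
  also have "\<dots> = laurent_sum xvar (\<lambda>n. theta_binom_coeff k \<bar>n\<bar> + vcosh (2 * int k + 2) * ?c n)"
    by (simp only: theta_binom_coeff_abs_rec)
  also have "\<dots> = theta_binom_sum k + vcosh (2 * int k + 2) * theta_binom_sum (Suc k)"
    unfolding theta_binom_sum_def
    by (simp add: laurent_sum_add laurent_sum_mult_left null_at_infinity_theta_binom_coeff
        null_at_infinity_mult_left)
  finally show ?thesis .
qed

lemma fls_tendsto_theta_binom_series: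
  "fls_tendsto (\<lambda>N. \<Sum>i<N. qbinom (k + i) (2 * k) * theta i) (theta_binom_sum k)"
proof -
  define g where "g i n = qbinom (k + i) (2 * k) * theta_coeff i n" for i n
  have "fls_tendsto (\<lambda>N. \<Sum>i<N. laurent_sum xvar (g i)) (theta_binom_sum k)"
    unfolding theta_binom_sum_def
  proof (rule fls_tendsto_laurent_sum_series)
    show "null_at_infinity (g i)" for i
      unfolding g_def by (intro null_at_infinity_mult_left null_at_infinity_theta_coeff)
    show "vanishes_below (g i n) (int i)" for i n
      unfolding g_def theta_coeff_def
      using vanishes_below_theta_binom_term[of "\<bar>n\<bar>" k i] by (auto elim: vanishes_below_mono)
    show "fls_tendsto (\<lambda>N. \<Sum>i<N. g i n) (theta_binom_coeff k \<bar>n\<bar>)" for n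
      unfolding g_def theta_coeff_def theta_binom_coeff_def
      using fls_tendsto_suminf[OF fls_tendsto_qbinom_qtri[of k "2 * k" "\<bar>n\<bar>"]]
      by (simp add: add.commute)
  qed
  moreover have "laurent_sum xvar (g i) = qbinom (k + i) (2 * k) * theta i" for i
    unfolding g_def theta_eq_laurent_sum
    by (rule laurent_sum_mult_left[OF null_at_infinity_theta_coeff])
  ultimately show ?thesis by simp
qed

section \<open>\<open>q\<close>-Pochhammer symbols\<close>

lemma qpoch_0 [simp]: "qpoch a 0 = 1"
  by (simp add: qpoch_def)

lemma qpoch_Suc: "qpoch a (Suc n) = qpoch a n * (1 - a * qq ^ n)"
  by (simp add: qpoch_def)

lemma vanishes_below_qq_power: "vanishes_below (qq ^ n) (2 * int n)"
  by (simp add: qq_power)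

lemma vanishes_below_qq: "vanishes_below qq 2"
  using vanishes_below_qq_power[of 1] by simp

lemma vanishes_below_xx: "vanishes_below xx 0"
  by (simp add: xx_def)

lemma vanishes_below_qq_xinv: "vanishes_below (qq * xinv) 2"
  using vanishes_below_mult[OF vanishes_below_qq vanishes_below_const] by (simp add: xinv_def)

lemma vanishes_below_mult_qq_power:
  "vanishes_below a L \<Longrightarrow> vanishes_below (a * qq ^ n) (L + 2 * int n)"
  by (rule vanishes_below_mult[OF _ vanishes_below_qq_power])

lemma one_minus_nonzero:
  assumes "vanishes_below f 1"
  shows "1 - f \<noteq> (0 :: 'a::comm_ring_1 fls)"
proof
  assume "1 - f = 0"
  then have "fls_nth (1 - f) 0 = 0" by simp
  with vanishes_below_nth[OF assms, of 0] show False by simp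
qed

lemma vanishes_below_qpoch: "vanishes_below a 0 \<Longrightarrow> vanishes_below (qpoch a n) 0"
  unfolding qpoch_def
  by (intro vanishes_below_prod vanishes_below_diff vanishes_below_1)
     (auto intro: vanishes_below_mono[OF vanishes_below_mult_qq_power])

lemma qpoch_nonzero:
  assumes "vanishes_below a 0" "a \<noteq> 1"
  shows "qpoch a n \<noteq> 0"
proof -
  have "1 - a * qq ^ j \<noteq> 0" for j
  proof (cases j)
    case 0
    with assms(2) show ?thesis by simp
  next
    case (Suc j')
    then have "vanishes_below (a * qq ^ j) 1"
      using vanishes_below_mult_qq_power[OF assms(1), of j] by (auto elim: vanishes_below_mono)
    then show ?thesis by (rule one_minus_nonzero)
  qed
  then show ?thesis unfolding qpoch_def by simp
qed

lemma vanishes_below_qpoch_Suc_diff: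
  assumes "vanishes_below a L" "0 \<le> L"
  shows "vanishes_below (qpoch a (Suc n) - qpoch a n) (L + 2 * int n)"
proof -
  have "qpoch a (Suc n) - qpoch a n = - (qpoch a n * (a * qq ^ n))"
    by (simp add: qpoch_Suc algebra_simps)
  moreover have "vanishes_below (qpoch a n * (a * qq ^ n)) (0 + (L + 2 * int n))"
    using assms
    by (intro vanishes_below_mult vanishes_below_qpoch vanishes_below_mult_qq_power)
       (auto elim: vanishes_below_mono)
  ultimately show ?thesis by simp
qed

lemma fls_tendsto_qpoch_inf:
  assumes "vanishes_below a 0"
  shows "fls_tendsto (qpoch a) (qpoch_inf a)"
proof -
  have "fls_tendsto (\<lambda>n. qpoch a (Suc n) - qpoch a n) 0"
    by (rule fls_tendsto_zeroI_linear[where c = 0])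
       (rule vanishes_below_mono[OF vanishes_below_qpoch_Suc_diff[OF assms]], simp_all)
  then obtain S where "fls_tendsto (qpoch a) S"
    using fls_convergent_if_differences_null by blast
  then show ?thesis
    unfolding qpoch_inf_def using fls_lim_eqI by simp
qed

lemma vanishes_below_qpoch_inf_diff:
  assumes "vanishes_below a L" "0 \<le> L"
  shows "vanishes_below (qpoch_inf a - qpoch a n) (L + 2 * int n)"
proof (rule vanishes_below_limit)
  have "vanishes_below a 0" using assms by (auto elim: vanishes_below_mono)
  then have "fls_tendsto (\<lambda>N. qpoch a (N + n)) (qpoch_inf a)"
    using fls_tendsto_shift_iff[of "qpoch a" n] fls_tendsto_qpoch_inf by blast
  then show "fls_tendsto (\<lambda>N. qpoch a (N + n) - qpoch a n) (qpoch_inf a - qpoch a n)"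
    by (intro fls_tendsto_diff fls_tendsto_const)
  have "vanishes_below (qpoch a (N + n) - qpoch a n) (L + 2 * int n)" for N
  proof (induction N)
    case (Suc N)
    have "vanishes_below (qpoch a (Suc (N + n)) - qpoch a (N + n)) (L + 2 * int n)"
      using vanishes_below_qpoch_Suc_diff[OF assms, of "N + n"] by (auto elim: vanishes_below_mono)
    from vanishes_below_add[OF this Suc.IH] show ?case by simp
  qed simp
  then show "eventually
      (\<lambda>N. vanishes_below (qpoch a (N + n) - qpoch a n) (L + 2 * int n)) sequentially"
    by simp
qed

lemma vanishes_below_qpoch_inf: "vanishes_below a 0 \<Longrightarrow> vanishes_below (qpoch_inf a) 0"
  by (rule vanishes_below_limit[OF fls_tendsto_qpoch_inf]) (simp_all add: vanishes_below_qpoch)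

lemma qpoch_qq_nonzero: "qpoch qq n \<noteq> 0"
proof (rule qpoch_nonzero)
  show "vanishes_below qq 0"
    by (rule vanishes_below_mono[OF vanishes_below_qq]) simp
  show "qq \<noteq> 1"
    using vanishes_below_nth[OF vanishes_below_qq, of 0] by auto
qed

lemma qpoch_inf_nonzero:
  assumes "vanishes_below a 0" "fls_nth a 0 \<noteq> 1"
  shows "qpoch_inf a \<noteq> 0"
proof
  assume "qpoch_inf a = 0"
  with vanishes_below_qpoch_inf_diff[OF assms(1), of 1] have "vanishes_below (a - 1) 2"
    by (simp add: qpoch_def)
  from vanishes_below_nth[OF this, of 0] assms(2) show False by simp
qed

lemma fls_subdegree_qpoch_qq: "fls_subdegree (qpoch qq n) = 0"
proof -
  have "vanishes_below (qpoch qq n - 1) 1"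
  proof (induction n)
    case (Suc n)
    have "vanishes_below (qq * qq ^ n) 1"
      using vanishes_below_mult_qq_power[OF vanishes_below_qq, of n]
      by (auto elim: vanishes_below_mono)
    moreover have "vanishes_below (qpoch qq n) 0"
      by (rule vanishes_below_qpoch) (rule vanishes_below_mono[OF vanishes_below_qq], simp)
    ultimately have "vanishes_below ((qpoch qq n - 1) - qpoch qq n * (qq * qq ^ n)) 1"
      using vanishes_below_mult[of "qpoch qq n" 0 "qq * qq ^ n" 1]
      by (intro vanishes_below_diff[OF Suc.IH]) simp
    then show ?case by (simp add: qpoch_Suc algebra_simps)
  qed simp
  from vanishes_below_nth[OF this, of 0] have "fls_nth (qpoch qq n) 0 = 1"
    by simp
  moreover have "vanishes_below (qpoch qq n) 0"
    by (rule vanishes_below_qpoch) (rule vanishes_below_mono[OF vanishes_below_qq], simp)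
  ultimately show ?thesis
    by (intro fls_subdegree_eq_0I) simp_all
qed

section \<open>The series \<open>S\<^sub>k\<close> in terms of \<open>\<sigma>~\<close>\<close>

definition sigma_denom :: "nat \<Rightarrow> vser" where
  "sigma_denom k = qpoch xx (k + 1) * qpoch (qq * xinv) k"

lemma sigma_tilde_eq: "sigma_tilde k = qtri (int k) / sigma_denom k"
  unfolding sigma_tilde_def sigma_denom_def qtri_of_nat[symmetric] by simp

lemma xx_ne_1: "xx \<noteq> 1"
  using xvar_ne_1 by (simp add: xx_def fls_const_eq_1_iff)

lemma sigma_denom_nonzero: "sigma_denom k \<noteq> 0"
proof -
  have "qq * xinv \<noteq> 1"
    using vanishes_below_nth[OF vanishes_below_qq_xinv, of 0] by auto
  moreover have "vanishes_below (qq * xinv) 0"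
    using vanishes_below_qq_xinv by (rule vanishes_below_mono) simp
  ultimately show ?thesis
    unfolding sigma_denom_def using qpoch_nonzero[OF vanishes_below_xx xx_ne_1] qpoch_nonzero
    by simp
qed

lemma sigma_denom_Suc:
  "sigma_denom (Suc k)
     = - (vv powi (2 * int k + 2)) * ((xx + xinv) - vcosh (2 * int k + 2)) * sigma_denom k"
proof -
  define P where "P = vv powi (2 * int k + 2)"
  have e1: "xx * qq ^ (k + 1) = xx * P" and e2: "qq * xinv * qq ^ k = xinv * P"
    using qq_power[of "Suc k"] by (simp_all add: P_def algebra_simps)
  have "sigma_denom (Suc k) = sigma_denom k * ((1 - xx * qq ^ (k + 1)) * (1 - qq * xinv * qq ^ k))"
    unfolding sigma_denom_def by (simp add: qpoch_Suc mult_ac)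
  also have "\<dots> = sigma_denom k * ((1 - xx * P) * (1 - xinv * P))"
    unfolding e1 e2 ..
  also have "(1 - xx * P) * (1 - xinv * P) = 1 - (xx + xinv) * P + (xx * xinv) * (P * P)"
    by (simp add: algebra_simps)
  also have "\<dots> = - P * ((xx + xinv) - (P + vv powi (- (2 * int k + 2))))"
  proof -
    have "P * vv powi (- (2 * int k + 2)) = 1"
      by (simp add: P_def flip: vv_powi_add)
    then show ?thesis unfolding xx_xinv by (simp add: algebra_simps)
  qed
  finally show ?thesis
    unfolding vcosh_def P_def by (simp add: algebra_simps)
qed

lemma sigma_denom_mult_theta_binom_sum:
  "sigma_denom k * theta_binom_sum k = qtri (int k) * ((1 - xx) * theta_binom_sum 0)"
proof (induction k)
  case 0
  then show ?case by (simp add: sigma_denom_def qpoch_def qtri_def)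
next
  case (Suc k)
  have "sigma_denom (Suc k) * theta_binom_sum (Suc k)
      = - (vv powi (2 * int k + 2)) * sigma_denom k
        * ((xx + xinv) * theta_binom_sum (Suc k) - vcosh (2 * int k + 2) * theta_binom_sum (Suc k))"
    unfolding sigma_denom_Suc by (simp add: algebra_simps)
  also have "\<dots> = - (vv powi (2 * int k + 2)) * (sigma_denom k * theta_binom_sum k)"
    unfolding theta_binom_sum_rec by simp
  also have "\<dots> = qtri (int (Suc k)) * ((1 - xx) * theta_binom_sum 0)"
    unfolding Suc.IH using qtri_succ[of "int k"] by (simp add: algebra_simps)
  finally show ?case .
qed

lemma theta_binom_sum_eq_sigma_tilde:
  "theta_binom_sum k = sigma_tilde k * ((1 - xx) * theta_binom_sum 0)"
  using sigma_denom_mult_theta_binom_sum[of k] sigma_denom_nonzero[of k]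
  unfolding sigma_tilde_eq by (simp add: field_simps)

lemma theta_binom_coeff_0_succ: "theta_binom_coeff 0 (m + 1) = theta_binom_coeff 0 m - qtri m"
  using fls_suminf_Suc_shift[OF fls_tendsto_qbinom_qtri[of 0 0 m]]
  unfolding theta_binom_coeff_def by (simp add: add_ac)

lemma one_minus_xx_mult_theta_binom_sum_0:
  "(1 - xx) * theta_binom_sum 0 = laurent_sum xvar (\<lambda>n. qtri (- n))"
proof -
  let ?c = "\<lambda>n. theta_binom_coeff 0 \<bar>n\<bar>"
  have null: "null_at_infinity ?c" "null_at_infinity (\<lambda>n. ?c (n - 1))"
    using null_at_infinity_theta_binom_coeff
      null_at_infinity_shift[OF null_at_infinity_theta_binom_coeff, of 0 "- 1"]
    by simp_all
  have "?c n - ?c (n - 1) = qtri (- n)" for n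
  proof (cases "1 \<le> n")
    case True
    then have "\<bar>n\<bar> = (n - 1) + 1" "\<bar>n - 1\<bar> = n - 1" by auto
    then show ?thesis using theta_binom_coeff_0_succ[of "n - 1"] qtri_minus[of "n - 1"] by simp
  next
    case False
    then have "\<bar>n - 1\<bar> = - n + 1" "\<bar>n\<bar> = - n" by auto
    then show ?thesis using theta_binom_coeff_0_succ[of "- n"] by simp
  qed
  then have "laurent_sum xvar (\<lambda>n. qtri (- n))
      = laurent_sum xvar ?c - laurent_sum xvar (\<lambda>n. ?c (n - 1))"
    using laurent_sum_diff[OF null] by simp
  also have "\<dots> = (1 - xx) * theta_binom_sum 0"
    unfolding laurent_sum_shift[OF xvar_nonzero null(1)] theta_binom_sum_def xx_def
    by (simp add: algebra_simps)
  finally show ?thesis ..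
qed

section \<open>The Jacobi triple product identity\<close>

definition gauss_binom :: "nat \<Rightarrow> nat \<Rightarrow> vser" where
  "gauss_binom n k = vv powi (int k * (int n - int k)) * qbinom n k"

lemma one_minus_vv_powi_double: "1 - vv powi (2 * j) = - (vv powi j * vsinh j)"
  unfolding vsinh_def by (simp add: algebra_simps flip: vv_powi_add)

lemma qpoch_qq_Suc: "qpoch qq (Suc j) = qpoch qq j * (1 - vv powi (2 * (int j + 1)))"
  using qq_power[of "Suc j"] by (simp add: qpoch_Suc algebra_simps)

lemma gauss_binom_Suc_right:
  assumes "k < n"
  shows "gauss_binom n (Suc k) * (1 - vv powi (2 * (int k + 1)))
    = gauss_binom n k * (1 - vv powi (2 * (int n - int k)))"
proof -
  have "gauss_binom n (Suc k) * (1 - vv powi (2 * (int k + 1)))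
      = - ((vv powi (int (Suc k) * (int n - int (Suc k))) * vv powi (int k + 1))
          * (qbinom n (Suc k) * vsinh (int k + 1)))"
    unfolding gauss_binom_def one_minus_vv_powi_double by (simp only: mult_ac mult_minus_right)
  also have "\<dots> = - ((vv powi (int k * (int n - int k)) * vv powi (int n - int k))
          * (vsinh (int n - int k) * qbinom n k))"
    by (simp only: qbinom_Suc_right_vsinh flip: vv_powi_add) (simp add: algebra_simps)
  also have "\<dots> = gauss_binom n k * (1 - vv powi (2 * (int n - int k)))"
    unfolding gauss_binom_def one_minus_vv_powi_double by (simp only: mult_ac mult_minus_right)
  finally show ?thesis .
qed

lemma gauss_binom_mult_qpoch:
  "k \<le> n \<Longrightarrow> gauss_binom n k * qpoch qq k * qpoch qq (n - k) = qpoch qq n"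
proof (induction k)
  case 0
  then show ?case by (simp add: gauss_binom_def)
next
  case (Suc k)
  then have "k < n" by simp
  then have nk: "n - k = Suc (n - Suc k)" by simp
  have "gauss_binom n (Suc k) * qpoch qq (Suc k) * qpoch qq (n - Suc k)
      = (gauss_binom n (Suc k) * (1 - vv powi (2 * (int k + 1))))
        * qpoch qq k * qpoch qq (n - Suc k)"
    by (simp add: qpoch_qq_Suc algebra_simps)
  also have "\<dots> = gauss_binom n k * qpoch qq k *
      (qpoch qq (n - Suc k) * (1 - vv powi (2 * (int n - int k))))"
    unfolding gauss_binom_Suc_right[OF \<open>k < n\<close>] by (simp add: algebra_simps)
  also have "qpoch qq (n - Suc k) * (1 - vv powi (2 * (int n - int k))) = qpoch qq (n - k)"
    unfolding nk qpoch_qq_Suc using \<open>k < n\<close> by (simp add: of_nat_diff algebra_simps)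
  finally show ?case using Suc \<open>k < n\<close> by simp
qed

definition jtp_coeff :: "nat \<Rightarrow> int \<Rightarrow> vser" where
  "jtp_coeff n m = (- 1) powi m * vv powi (int n * int n - m) * qbinom_int (2 * n) (int n + m)"

lemma jtp_coeff_eq_0: "int n < \<bar>m\<bar> \<Longrightarrow> jtp_coeff n m = 0"
  by (cases "0 < m") (auto simp: jtp_coeff_def qbinom_int_def qbinom_eq_0)

lemma jtp_coeff_rec:
  "jtp_coeff (Suc n) m = (1 + vv powi (4 * int n + 2)) * jtp_coeff n m
     - vv powi (2 * int n) * jtp_coeff n (m - 1) - vv powi (2 * int n + 2) * jtp_coeff n (m + 1)"
proof -
  define X Y Z P where "X = qbinom_int (2 * n) (int n + m - 1)"
    and "Y = qbinom_int (2 * n) (int n + m + 1)" and "Z = qbinom_int (2 * n) (int n + m)"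
    and "P = vv powi (int (Suc n) * int (Suc n) - m)"
  have J: "qbinom_int (2 * Suc n) (int (Suc n) + m) = X + Y + vcosh (2 * int n + 1) * Z"
    using qbinom_int_three_term[of "2 * n" "int n + m"] by (simp add: X_def Y_def Z_def add_ac)
  have "jtp_coeff (Suc n) m = (- 1) powi m * P * (X + Y + vcosh (2 * int n + 1) * Z)"
    by (simp only: jtp_coeff_def P_def J)
  also have "\<dots> = (- 1) powi m * ((1 + vv powi (4 * int n + 2)) * vv powi (int n * int n - m)) * Z
      + (- 1) powi m * (vv powi (2 * int n) * vv powi (int n * int n - (m - 1))) * X
      + (- 1) powi m * (vv powi (2 * int n + 2) * vv powi (int n * int n - (m + 1))) * Y"
  proof -
    have "vv powi (2 * int n) * vv powi (int n * int n - (m - 1)) = P"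
      and "vv powi (2 * int n + 2) * vv powi (int n * int n - (m + 1)) = P"
      and "(1 + vv powi (4 * int n + 2)) * vv powi (int n * int n - m) = P * vcosh (2 * int n + 1)"
      unfolding P_def vcosh_def
      by (simp_all only: distrib_left distrib_right mult_1_left flip: vv_powi_add)
         (simp_all add: algebra_simps)
    then show ?thesis by (simp add: algebra_simps)
  qed
  also have "\<dots> = (1 + vv powi (4 * int n + 2)) * jtp_coeff n m
      - vv powi (2 * int n) * jtp_coeff n (m - 1) - vv powi (2 * int n + 2) * jtp_coeff n (m + 1)"
    using minus_one_powi_succ[where 'a = vser and j = m]
      minus_one_powi_succ[where 'a = vser and j = "m - 1"]
    unfolding jtp_coeff_def X_def Y_def Z_def by (simp add: algebra_simps)
  finally show ?thesis .
qed

lemma qpoch_mult_qpoch_Suc: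
  "qpoch xx (Suc n) * qpoch (qq * xinv) (Suc n) = qpoch xx n * qpoch (qq * xinv) n
     * ((1 + vv powi (4 * int n + 2)) - vv powi (2 * int n) * xx - vv powi (2 * int n + 2) * xinv)"
proof -
  have "qq * xinv * qq ^ n = xinv * (qq * qq ^ n)"
    by (simp only: mult_ac)
  also have "qq * qq ^ n = vv powi (2 * int n + 2)"
    using qq_power[of "Suc n"] by (simp add: algebra_simps)
  finally have q: "qq * xinv * qq ^ n = vv powi (2 * int n + 2) * xinv"
    by (simp only: mult.commute)
  have "(1 - xx * qq ^ n) * (1 - qq * xinv * qq ^ n)
      = 1 - vv powi (2 * int n) * xx - vv powi (2 * int n + 2) * xinv
        + (xx * xinv) * (vv powi (2 * int n) * vv powi (2 * int n + 2))"
    unfolding q unfolding qq_power by (simp add: algebra_simps)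
  also have "\<dots>
      = (1 + vv powi (4 * int n + 2)) - vv powi (2 * int n) * xx - vv powi (2 * int n + 2) * xinv"
    unfolding xx_xinv by (simp only: mult_1_left flip: vv_powi_add) (simp add: algebra_simps)
  finally show ?thesis by (simp add: qpoch_Suc mult_ac)
qed

lemma qpoch_mult_qpoch_eq_laurent_sum:
  "qpoch xx n * qpoch (qq * xinv) n = laurent_sum xvar (jtp_coeff n)"
proof (induction n)
  case 0
  have "jtp_coeff 0 = (\<lambda>m. if m = 0 then 1 else 0)"
    by (auto simp: jtp_coeff_def qbinom_int_def fun_eq_iff qbinom_eq_0)
  then show ?case by (simp add: laurent_sum_single)
next
  case (Suc n)
  have null: "null_at_infinity (jtp_coeff n)"
    by (rule null_at_infinity_finite_support[of "int n"]) (rule jtp_coeff_eq_0)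
  then have null': "null_at_infinity (\<lambda>m. jtp_coeff n (m - 1))"
    "null_at_infinity (\<lambda>m. jtp_coeff n (m + 1))"
    using null_at_infinity_shift[OF null, of "- 1"] null_at_infinity_shift[OF null, of 1]
    by simp_all
  have shift: "xx * laurent_sum xvar (jtp_coeff n) = laurent_sum xvar (\<lambda>m. jtp_coeff n (m - 1))"
    "xinv * laurent_sum xvar (jtp_coeff n) = laurent_sum xvar (\<lambda>m. jtp_coeff n (m + 1))"
    using laurent_sum_shift[OF xvar_nonzero null] laurent_sum_shift'[OF xvar_nonzero null]
    by (simp_all add: xx_def xinv_def)
  have "qpoch xx (Suc n) * qpoch (qq * xinv) (Suc n)
      = (1 + vv powi (4 * int n + 2)) * laurent_sum xvar (jtp_coeff n)
        - vv powi (2 * int n) * (xx * laurent_sum xvar (jtp_coeff n))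
        - vv powi (2 * int n + 2) * (xinv * laurent_sum xvar (jtp_coeff n))"
    unfolding qpoch_mult_qpoch_Suc Suc.IH by (simp add: algebra_simps)
  also have "\<dots> = laurent_sum xvar (jtp_coeff (Suc n))"
    unfolding jtp_coeff_rec shift
    by (simp add: laurent_sum_diff laurent_sum_mult_left null null' null_at_infinity_mult_left
        null_at_infinity_diff)
  finally show ?case .
qed

lemma vanishes_below_qpoch_inf_qq_diff:
  "vanishes_below (qpoch_inf qq - qpoch qq n) (2 * int n + 2)"
  using vanishes_below_qpoch_inf_diff[OF vanishes_below_qq, of n] by (simp add: add.commute)

lemma vanishes_below_qpoch_inf_qq_mult_diff:
  assumes "a + b = n"
  shows "vanishes_below (qpoch_inf qq * qpoch qq n - qpoch qq a * qpoch qq b)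
      (2 * int (min a b) + 2)"
proof -
  let ?P = "qpoch_inf qq" and ?L = "2 * int (min a b) + 2"
  have tail: "vanishes_below (?P - qpoch qq j) ?L" if "min a b \<le> j" for j
    using vanishes_below_qpoch_inf_qq_diff[of j] by (rule vanishes_below_mono) (use that in simp)
  have "vanishes_below qq 0"
    by (rule vanishes_below_mono[OF vanishes_below_qq]) simp
  then have P: "vanishes_below ?P 0" and a: "vanishes_below (qpoch qq a) 0"
    by (simp_all add: vanishes_below_qpoch vanishes_below_qpoch_inf)
  have "vanishes_below (?P * (?P - qpoch qq a) + qpoch qq a * (?P - qpoch qq b)
      - ?P * (?P - qpoch qq n)) (0 + ?L)"
    using assms by (intro vanishes_below_add vanishes_below_diff vanishes_below_mult P a tail) auto
  then show ?thesis by (simp add: algebra_simps)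
qed

lemma vanishes_below_qpoch_inf_mult_gauss_binom:
  assumes "a + b = n"
  shows "vanishes_below (qpoch_inf qq * gauss_binom n a - 1) (2 * int (min a b) + 2)"
proof -
  define D where "D = qpoch qq a * qpoch qq b"
  have "D \<noteq> 0" and "fls_subdegree D = 0"
    unfolding D_def by (simp_all add: qpoch_qq_nonzero fls_subdegree_qpoch_qq)
  then have inv: "vanishes_below (inverse D) 0"
    by (intro vanishes_below_inverse)
  have "gauss_binom n a * D = qpoch qq n"
  proof -
    have "b = n - a" using assms by simp
    then show ?thesis
      using gauss_binom_mult_qpoch[of a n] assms unfolding D_def by (simp add: mult.assoc)
  qed
  with \<open>D \<noteq> 0\<close>
  have "qpoch_inf qq * gauss_binom n a - 1 = (qpoch_inf qq * qpoch qq n - D) * inverse D"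
    by (simp add: field_simps)
  moreover have "vanishes_below ((qpoch_inf qq * qpoch qq n - D) * inverse D)
      (2 * int (min a b) + 2 + 0)"
    using vanishes_below_qpoch_inf_qq_mult_diff[OF assms] inv
    unfolding D_def by (rule vanishes_below_mult)
  ultimately show ?thesis by simp
qed

lemma jtp_coeff_eq_gauss_binom:
  assumes "\<bar>m\<bar> \<le> int n"
  shows "jtp_coeff n m = qtri (- m) * gauss_binom (2 * n) (nat (int n + m))"
proof -
  have "vv powi (int n * int n - m)
      = vv powi (- m * (- m + 1)) * vv powi ((int n + m) * (int n - m))"
    by (simp only: flip: vv_powi_add) (simp add: algebra_simps)
  then show ?thesis
    unfolding jtp_coeff_def qtri_def gauss_binom_def qbinom_int_def
    using assms by (simp add: power_int_minus_one_minus algebra_simps)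
qed

lemma vanishes_below_qtri_minus: "vanishes_below (qtri (- m)) (\<bar>m\<bar> * \<bar>m\<bar> - \<bar>m\<bar>)"
proof (rule vanishes_below_mono[OF vanishes_below_qtri])
  have "\<bar>m\<bar> * \<bar>m\<bar> = m * m" by (simp add: abs_mult_self_eq)
  then show "\<bar>m\<bar> * \<bar>m\<bar> - \<bar>m\<bar> \<le> - m * (- m + 1)" by (simp add: algebra_simps)
qed

lemma null_at_infinity_qtri_minus: "null_at_infinity (\<lambda>m. qtri (- m))"
proof (rule null_at_infinityI_linear[where C = "- 1"])
  fix n :: int
  have "0 \<le> (\<bar>n\<bar> - 1) * (\<bar>n\<bar> - 1)" by simp
  then have "\<bar>n\<bar> + - 1 \<le> \<bar>n\<bar> * \<bar>n\<bar> - \<bar>n\<bar>" by (simp add: algebra_simps)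
  then show "vanishes_below (qtri (- n)) (\<bar>n\<bar> + - 1)"
    by (rule vanishes_below_mono[OF vanishes_below_qtri_minus])
qed

lemma vanishes_below_qpoch_inf_mult_jtp_coeff:
  "vanishes_below (qpoch_inf qq * jtp_coeff n m - qtri (- m)) (int n)"
proof (cases "\<bar>m\<bar> \<le> int n")
  case True
  define a b where "a = nat (int n + m)" and "b = nat (int n - m)"
  have ab: "a + b = 2 * n" and min: "int (min a b) = int n - \<bar>m\<bar>"
    using True unfolding a_def b_def by auto
  have "qpoch_inf qq * jtp_coeff n m - qtri (- m)
      = qtri (- m) * (qpoch_inf qq * gauss_binom (2 * n) a - 1)"
    unfolding jtp_coeff_eq_gauss_binom[OF True] a_def by (simp add: algebra_simps)
  moreover have "vanishes_below (qtri (- m) * (qpoch_inf qq * gauss_binom (2 * n) a - 1))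
      ((\<bar>m\<bar> * \<bar>m\<bar> - \<bar>m\<bar>) + (2 * int (min a b) + 2))"
    by (intro vanishes_below_mult vanishes_below_qtri_minus
        vanishes_below_qpoch_inf_mult_gauss_binom ab)
  moreover have "0 \<le> (\<bar>m\<bar> - 1) * (\<bar>m\<bar> - 2)"
    by (cases "\<bar>m\<bar> \<le> 1") (auto intro: mult_nonpos_nonpos)
  then have "int n \<le> (\<bar>m\<bar> * \<bar>m\<bar> - \<bar>m\<bar>) + (2 * int (min a b) + 2)"
    unfolding min using True by (simp add: algebra_simps)
  ultimately show ?thesis by (auto elim: vanishes_below_mono)
next
  case False
  moreover have "0 \<le> (\<bar>m\<bar> - 1) * (\<bar>m\<bar> - 1)" by simp
  ultimately have "int n \<le> \<bar>m\<bar> * \<bar>m\<bar> - \<bar>m\<bar>"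
    by (simp add: algebra_simps)
  with False show ?thesis
    using vanishes_below_qtri_minus[of m] by (simp add: jtp_coeff_eq_0 vanishes_below_mono)
qed

theorem jacobi_triple_product:
  "laurent_sum xvar (\<lambda>m. qtri (- m)) = qpoch_inf qq * (qpoch_inf xx * qpoch_inf (qq * xinv))"
proof -
  have null: "null_at_infinity (\<lambda>m. qpoch_inf qq * jtp_coeff n m)" for n
    by (intro null_at_infinity_mult_left null_at_infinity_finite_support[of "int n"] jtp_coeff_eq_0)
  have "fls_tendsto (\<lambda>n. laurent_sum xvar (\<lambda>m. qpoch_inf qq * jtp_coeff n m))
      (laurent_sum xvar (\<lambda>m. qtri (- m)))"
    by (intro fls_tendsto_laurent_sum_uniform null null_at_infinity_qtri_minus
        vanishes_below_qpoch_inf_mult_jtp_coeff)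
  moreover have "laurent_sum xvar (\<lambda>m. qpoch_inf qq * jtp_coeff n m)
      = qpoch_inf qq * (qpoch xx n * qpoch (qq * xinv) n)" for n
    using null_at_infinity_finite_support[of "int n" "jtp_coeff n"] jtp_coeff_eq_0
    by (simp add: laurent_sum_mult_left qpoch_mult_qpoch_eq_laurent_sum)
  moreover have "fls_tendsto (\<lambda>n. qpoch_inf qq * (qpoch xx n * qpoch (qq * xinv) n))
      (qpoch_inf qq * (qpoch_inf xx * qpoch_inf (qq * xinv)))"
    using vanishes_below_xx vanishes_below_mono[OF vanishes_below_qq_xinv, of 0]
    by (intro fls_tendsto_mult_left fls_tendsto_mult fls_tendsto_qpoch_inf) simp_all
  ultimately show ?thesis
    using fls_tendsto_unique by simp
qed

section \<open>Summing over \<open>k\<close>\<close>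

lemma qpoch_inf_product_nonzero: "qpoch_inf qq * qpoch_inf xx * qpoch_inf (qq * xinv) \<noteq> 0"
proof -
  have "vanishes_below qq 0" "vanishes_below (qq * xinv) 0"
    using vanishes_below_qq vanishes_below_qq_xinv by (auto elim: vanishes_below_mono)
  moreover have "fls_nth qq 0 \<noteq> 1" "fls_nth (qq * xinv) 0 \<noteq> 1"
    using vanishes_below_nth[OF vanishes_below_qq, of 0]
      vanishes_below_nth[OF vanishes_below_qq_xinv, of 0]
    by simp_all
  moreover have "fls_nth xx 0 \<noteq> 1"
    using xvar_ne_1 by (simp add: xx_def)
  ultimately show ?thesis
    using vanishes_below_xx by (simp add: qpoch_inf_nonzero)
qed

lemma theta_binom_sum_eq:
  "theta_binom_sum k = sigma_tilde k * (qpoch_inf qq * qpoch_inf xx * qpoch_inf (qq * xinv))"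
  unfolding theta_binom_sum_eq_sigma_tilde[of k] one_minus_xx_mult_theta_binom_sum_0
    jacobi_triple_product by (simp add: mult.assoc)

lemma P_term_eq:
  "P_term a k = inverse (qpoch_inf qq * qpoch_inf xx * qpoch_inf (qq * xinv))
     * fls_suminf (\<lambda>i. embq (a (- int k - 1)) * (qbinom (k + i) (2 * k) * theta i))"
proof -
  have "fls_suminf (\<lambda>i. embq (a (- int k - 1)) * (qbinom (k + i) (2 * k) * theta i))
      = embq (a (- int k - 1)) * theta_binom_sum k"
    using fls_tendsto_mult_left[OF fls_tendsto_theta_binom_series, of "embq (a (- int k - 1))" k]
    by (intro fls_suminf_eqI) (simp add: sum_distrib_left)
  then show ?thesis
    using qpoch_inf_product_nonzero
    unfolding P_term_def theta_binom_sum_eq by (simp add: field_simps)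
qed

lemma sum_triangle_swap:
  fixes t :: "nat \<Rightarrow> nat \<Rightarrow> 'a::comm_monoid_add"
  assumes "\<And>k i. i < k \<Longrightarrow> t k i = 0"
  shows "(\<Sum>i<N. \<Sum>k\<in>{0..i}. t k i) = (\<Sum>k<N. \<Sum>i<N. t k i)"
proof -
  have "(\<Sum>k\<in>{0..i}. t k i) = (\<Sum>k<N. t k i)" if "i < N" for i
  proof -
    have "(\<Sum>k<N. t k i) = (\<Sum>k\<in>{0..i} \<union> {i<..<N}. t k i)"
      using that by (intro sum.cong) auto
    also have "\<dots> = (\<Sum>k\<in>{0..i}. t k i) + (\<Sum>k\<in>{i<..<N}. t k i)"
      by (rule sum.union_disjoint) auto
    also have "(\<Sum>k\<in>{i<..<N}. t k i) = 0"
      by (intro sum.neutral) (auto intro: assms)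
    finally show ?thesis by simp
  qed
  then have "(\<Sum>i<N. \<Sum>k\<in>{0..i}. t k i) = (\<Sum>i<N. \<Sum>k<N. t k i)"
    by (rule sum.cong[OF refl]) simp
  also have "\<dots> = (\<Sum>k<N. \<Sum>i<N. t k i)"
    by (rule sum.swap)
  finally show ?thesis .
qed

lemma fls_tendsto_triangle_double_series:
  fixes t :: "nat \<Rightarrow> nat \<Rightarrow> vser"
  assumes bound: "\<And>k i. vanishes_below (t k i) (int i + c)"
    and triangle: "\<And>k i. i < k \<Longrightarrow> t k i = 0"
  shows "fls_tendsto (\<lambda>N. \<Sum>i<N. \<Sum>k\<in>{0..i}. t k i) (fls_suminf (\<lambda>i. \<Sum>k\<in>{0..i}. t k i))"
    and "fls_tendsto (\<lambda>N. \<Sum>k<N. fls_suminf (t k)) (fls_suminf (\<lambda>i. \<Sum>k\<in>{0..i}. t k i))"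
proof -
  have rows: "fls_tendsto (t k) 0" for k
    by (rule fls_tendsto_zeroI_linear[OF bound])
  show diag: "fls_tendsto (\<lambda>N. \<Sum>i<N. \<Sum>k\<in>{0..i}. t k i) (fls_suminf (\<lambda>i. \<Sum>k\<in>{0..i}. t k i))"
    by (intro fls_tendsto_suminf fls_tendsto_zeroI_linear[of _ c] vanishes_below_sum bound)
  have "vanishes_below ((\<Sum>k<N. fls_suminf (t k)) - (\<Sum>i<N. \<Sum>k\<in>{0..i}. t k i)) (int N + c)" for N
  proof -
    have "(\<Sum>k<N. fls_suminf (t k)) - (\<Sum>i<N. \<Sum>k\<in>{0..i}. t k i)
        = (\<Sum>k<N. fls_suminf (t k) - (\<Sum>i<N. t k i))"
      using sum_triangle_swap[OF triangle, where N = N] by (simp add: sum_subtractf)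
    also have "vanishes_below \<dots> (int N + c)"
      by (intro vanishes_below_sum vanishes_below_series_tail fls_tendsto_suminf rows)
         (auto intro: vanishes_below_mono[OF bound])
    finally show ?thesis .
  qed
  from fls_tendsto_add[OF fls_tendsto_zeroI_linear[OF this] diag]
  show "fls_tendsto (\<lambda>N. \<Sum>k<N. fls_suminf (t k)) (fls_suminf (\<lambda>i. \<Sum>k\<in>{0..i}. t k i))"
    by simp
qed

lemma vanishes_below_embq: "vanishes_below f L \<Longrightarrow> vanishes_below (embq f) (2 * L)"
  unfolding vanishes_below_def embq_def
  by (auto simp: fls_nth_compose_power fls_of_int_coeffs.rep_eq)

lemma vanishes_below_P_summand:
  assumes "\<forall>n<0. a n \<noteq> 0 \<longrightarrow> fls_subdegree (a n) \<ge> - (n * (n + 3)) div 2 + C"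
  shows "vanishes_below (embq (a (- int k - 1)) * (qbinom (k + i) (2 * k) * theta i))
      (int i + (2 * C + 1))"
proof -
  define L where "L = - ((- int k - 1) * (- int k - 1 + 3)) div 2 + C"
  have "vanishes_below (a (- int k - 1)) L"
    using assms[rule_format, of "- int k - 1"] unfolding L_def by (auto simp: vanishes_below_iff)
  then have "vanishes_below (embq (a (- int k - 1)) * (qbinom (k + i) (2 * k) * theta i))
      (2 * L + (- int (2 * k) * (int (k + i) - int (2 * k)) + int i * (int i + 1)))"
    by (intro vanishes_below_mult vanishes_below_embq vanishes_below_qbinom vanishes_below_theta)
  then show ?thesis
  proof (rule vanishes_below_mono)
    have "- ((- int k - 1) * (- int k - 1 + 3)) - 1
        \<le> 2 * (- ((- int k - 1) * (- int k - 1 + 3)) div 2)"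
      by linarith
    moreover have "0 \<le> (int i - int k) * (int i - int k)" by simp
    ultimately show "int i + (2 * C + 1)
        \<le> 2 * L + (- int (2 * k) * (int (k + i) - int (2 * k)) + int i * (int i + 1))"
      unfolding L_def by (simp add: algebra_simps)
  qed
qed

lemma f_coef_mult_theta:
  "f_coef a i * theta i = (\<Sum>k\<in>{0..i}. embq (a (- int k - 1)) * (qbinom (k + i) (2 * k) * theta i))"
  unfolding f_coef_def sum_distrib_right by (simp add: mult_ac)

theorem theorem4p4:
  fixes a :: "int \<Rightarrow> int fls"
  assumes "lower_bound_cond a"
  shows "(\<forall>i. fls_summable (theta_inner_term i))
    \<and> fls_summable (P_term a)
    \<and> fls_summable (\<lambda>i. f_coef a i * theta i)
    \<and> fls_convergent (qpoch qq) \<and> fls_convergent (qpoch xx) \<and> fls_convergent (qpoch (qq * xinv))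
    \<and> fls_suminf (P_term a)
        = inverse (qpoch_inf qq * qpoch_inf xx * qpoch_inf (qq * xinv))
          * fls_suminf (\<lambda>i. f_coef a i * theta i)"
proof -
  obtain C where C: "\<forall>n<0. a n \<noteq> 0 \<longrightarrow> fls_subdegree (a n) \<ge> - (n * (n + 3)) div 2 + C"
    using assms unfolding lower_bound_cond_def by blast
  define t where "t k i = embq (a (- int k - 1)) * (qbinom (k + i) (2 * k) * theta i)" for k i
  let ?U = "fls_suminf (\<lambda>i. \<Sum>k\<in>{0..i}. t k i)"
    and ?D = "qpoch_inf qq * qpoch_inf xx * qpoch_inf (qq * xinv)"
  have bound: "vanishes_below (t k i) (int i + (2 * C + 1))" for k i
    unfolding t_def by (rule vanishes_below_P_summand[OF C])
  have triangle: "t k i = 0" if "i < k" for k i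
    unfolding t_def using that by (simp add: qbinom_eq_0)
  note double_series = fls_tendsto_triangle_double_series[OF bound triangle]
  have f_series: "fls_tendsto (\<lambda>N. \<Sum>i<N. f_coef a i * theta i) ?U"
    using double_series(1) by (simp add: f_coef_mult_theta t_def)
  have P_series: "fls_tendsto (\<lambda>N. \<Sum>k<N. P_term a k) (inverse ?D * ?U)"
    using fls_tendsto_mult_left[OF double_series(2)] by (simp add: P_term_eq t_def sum_distrib_left)
  have "vanishes_below b 0" if "b \<in> {qq, xx, qq * xinv}" for b
    using that vanishes_below_xx vanishes_below_qq vanishes_below_qq_xinv
    by (auto elim: vanishes_below_mono)
  then show ?thesis
    using fls_summableI[OF fls_tendsto_suminf[OF fls_tendsto_theta_inner_term]]
      fls_summableI[OF f_series] fls_summableI[OF P_series]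
      fls_suminf_eqI[OF f_series] fls_suminf_eqI[OF P_series]
    by (simp add: fls_convergentI[OF fls_tendsto_qpoch_inf])
qed

end
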